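(* Let $R=\mathbb{C}[x,y,z]$ and $J=(yz(y-z),\,zx(z-x),\,xy(x-y))\subseteq R$. Then (1) $\widehat{\alpha}(J)=\frac{5}{2}$; (2) $\alpha(J^{(2k)})=5k$ for all $k\ge 2$; (3) $\alpha(J^{(2k+1)})=5k+3$ for all $k\ge 0$; (4) $\alpha(J^{(2)})=6$.
   Context: For a homogeneous ideal $I$, $\alpha(I)$ denotes the least degree of a nonzero homogeneous element of $I$; $I^{(m)}=\bigcap_{\mathfrak p\in \operatorname{Ass}(R/I)} (I^mR_{\mathfrak p}\cap R)$ is the $m$-th symbolic power (with $I^{(1)}=I$); $\widehat{\alpha}(I)=\lim_{m\to\infty}\alpha(I^{(m)})/m$ is the Waldschmidt constant. *)

theory Defs
  imports Complex_Main "HOL-Computational_Algebra.Polynomial"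
begin

text \<open>The polynomial ring C[x,y,z] is modelled as complex poly poly poly:
  the outermost variable is z, the middle one y, the innermost one x.\<close>

type_synonym cpoly3 = "complex poly poly poly"

definition X :: cpoly3 where "X = [:[:[:0, 1:]:]:]"
definition Y :: cpoly3 where "Y = [:[:0, 1:]:]"
definition Z :: cpoly3 where "Z = [:0, 1:]"

definition coeff3 :: "cpoly3 \<Rightarrow> nat \<Rightarrow> nat \<Rightarrow> nat \<Rightarrow> complex" where
  "coeff3 f i j k = coeff (coeff (coeff f k) j) i"

definition homog_of_deg :: "cpoly3 \<Rightarrow> nat \<Rightarrow> bool" where
  "homog_of_deg f d \<longleftrightarrow> (\<forall>i j k. coeff3 f i j k \<noteq> 0 \<longrightarrow> i + j + k = d)"

definition alpha :: "cpoly3 set \<Rightarrow> nat" where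
  "alpha I = (LEAST d. \<exists>f\<in>I. f \<noteq> 0 \<and> homog_of_deg f d)"

definition is_ideal :: "'a::comm_ring_1 set \<Rightarrow> bool" where
  "is_ideal I \<longleftrightarrow> 0 \<in> I \<and> (\<forall>a\<in>I. \<forall>b\<in>I. a + b \<in> I) \<and> (\<forall>r a. a \<in> I \<longrightarrow> r * a \<in> I)"

definition is_prime_ideal :: "'a::comm_ring_1 set \<Rightarrow> bool" where
  "is_prime_ideal P \<longleftrightarrow> is_ideal P \<and> P \<noteq> UNIV \<and> (\<forall>a b. a * b \<in> P \<longrightarrow> a \<in> P \<or> b \<in> P)"

definition ideal_gen :: "'a::comm_ring_1 set \<Rightarrow> 'a set" where
  "ideal_gen S = \<Inter>{I. is_ideal I \<and> S \<subseteq> I}"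

fun ideal_pow :: "'a::comm_ring_1 set \<Rightarrow> nat \<Rightarrow> 'a set" where
  "ideal_pow I 0 = UNIV"
| "ideal_pow I (Suc m) = ideal_gen {a * b | a b. a \<in> ideal_pow I m \<and> b \<in> I}"

definition ass :: "'a::comm_ring_1 set \<Rightarrow> 'a set set" where
  "ass I = {P. is_prime_ideal P \<and> (\<exists>f. P = {g. g * f \<in> I})}"

text \<open>Symbolic power: intersection over P in Ass(R/I) of the contractions
  I^m R_P \<inter> R = {f. \<exists>s\<notin>P. s f \<in> I^m}\<close>
definition symb_pow :: "'a::comm_ring_1 set \<Rightarrow> nat \<Rightarrow> 'a set" where
  "symb_pow I m = (\<Inter>P\<in>ass I. {f. \<exists>s. s \<notin> P \<and> s * f \<in> ideal_pow I m})"

definition Jideal :: "cpoly3 set" where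
  "Jideal = ideal_gen {Y * Z * (Y - Z), Z * X * (Z - X), X * Y * (X - Y)}"

end

theory Submission
  imports Defs
begin

text \<open>
  J is the ideal of the seven points of the projective plane whose coordinates are 0 or 1,
  i.e. the indicator vectors of the nonempty subsets of {x, y, z}. Six lines contain three
  of these points and three more lines contain two of them.

  An element of J^(m) vanishes to order at least m at each of the points. A form of degree d
  whose orders of vanishing at points of a line add up to more than d is divisible by that
  line. Peeling off such lines, and otherwise adding up the nine line inequalities, shows
  that orders m_t at the seven points force 3 (m_0 + ... + m_3) + 6 (m_4 + m_5 + m_6) <= 12 d,
  hence d >= 5m/2; in degree 5 with double points the peeling runs out of degree.

  Conversely, l = x + y + z lies in no associated prime of J, so identities l^n F in J^m
  produce forms F of degrees 3, 6, 8, 10, 15 in J^(1), J^(2), J^(3), J^(4), J^(6), and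
  products of these attain the bound.
\<close>

section \<open>Ideals and symbolic powers\<close>

lemma is_ideal_ideal_gen: "is_ideal (ideal_gen S)"
  unfolding is_ideal_def ideal_gen_def by blast

lemma ideal_gen_subset: "S \<subseteq> ideal_gen S"
  unfolding ideal_gen_def by blast

lemma ideal_gen_minimal: "is_ideal I \<Longrightarrow> S \<subseteq> I \<Longrightarrow> ideal_gen S \<subseteq> I"
  unfolding ideal_gen_def by blast

lemma ideal_zero: "is_ideal I \<Longrightarrow> 0 \<in> I"
  unfolding is_ideal_def by blast

lemma ideal_add: "is_ideal I \<Longrightarrow> a \<in> I \<Longrightarrow> b \<in> I \<Longrightarrow> a + b \<in> I"
  unfolding is_ideal_def by blast

lemma ideal_mult_left: "is_ideal I \<Longrightarrow> a \<in> I \<Longrightarrow> r * a \<in> I"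
  unfolding is_ideal_def by blast

lemma ideal_mult_right: "is_ideal I \<Longrightarrow> a \<in> I \<Longrightarrow> a * r \<in> I"
  using ideal_mult_left[of I a r] by (simp add: mult.commute)

lemma ideal_sum: "is_ideal I \<Longrightarrow> (\<And>x. x \<in> A \<Longrightarrow> f x \<in> I) \<Longrightarrow> sum f A \<in> I"
  by (induction A rule: infinite_finite_induct) (auto intro: ideal_zero ideal_add)

lemma ideal_eq_UNIV_if_one: "is_ideal I \<Longrightarrow> 1 \<in> I \<Longrightarrow> I = UNIV"
  using ideal_mult_left[of I 1] by auto

lemma is_ideal_ideal_pow: "is_ideal I \<Longrightarrow> is_ideal (ideal_pow I m)"
  by (cases m) (auto simp: is_ideal_def is_ideal_ideal_gen[unfolded is_ideal_def])

lemma ideal_pow_SucI: "a \<in> ideal_pow I m \<Longrightarrow> b \<in> I \<Longrightarrow> a * b \<in> ideal_pow I (Suc m)"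
  using ideal_gen_subset[of "{a * b |a b. a \<in> ideal_pow I m \<and> b \<in> I}"] by auto

lemma ideal_pow_one: "is_ideal I \<Longrightarrow> ideal_pow I 1 = I"
proof
  assume I: "is_ideal I"
  have "{a * b |a b. a \<in> ideal_pow I 0 \<and> b \<in> I} \<subseteq> I"
    using I by (auto intro: ideal_mult_left)
  then show "ideal_pow I 1 \<subseteq> I"
    using ideal_gen_minimal[OF I] by simp
  show "I \<subseteq> ideal_pow I 1"
    using ideal_pow_SucI[of 1 I 0] by auto
qed

lemma ideal_pow_induct:
  assumes I: "is_ideal I"
    and K: "\<And>m. is_ideal (K m)" and K0: "\<And>x. x \<in> K 0"
    and KS: "\<And>m a b. a \<in> K m \<Longrightarrow> b \<in> I \<Longrightarrow> a * b \<in> K (Suc m)"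
  shows "ideal_pow I m \<subseteq> K m"
proof (induction m)
  case 0
  then show ?case using K0 by auto
next
  case (Suc m)
  have "{a * b |a b. a \<in> ideal_pow I m \<and> b \<in> I} \<subseteq> K (Suc m)"
    using Suc KS by blast
  then show ?case by (auto dest: ideal_gen_minimal[OF K])
qed

lemma ideal_pow_mult:
  assumes I: "is_ideal I" and a: "a \<in> ideal_pow I m" and b: "b \<in> ideal_pow I n"
  shows "a * b \<in> ideal_pow I (m + n)"
proof -
  have "ideal_pow I n \<subseteq> {b. a * b \<in> ideal_pow I (m + n)}"
  proof (rule ideal_pow_induct[OF I])
    show "is_ideal {b. a * b \<in> ideal_pow I (m + k)}" for k
      using is_ideal_ideal_pow[OF I, of "m + k"]
      unfolding is_ideal_def by (auto simp: distrib_left mult.left_commute)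
    show "c \<in> {b. a * b \<in> ideal_pow I (m + 0)}" for c
      using a is_ideal_ideal_pow[OF I] by (auto intro: ideal_mult_right)
    show "c * d \<in> {b. a * b \<in> ideal_pow I (m + Suc k)}"
      if "c \<in> {b. a * b \<in> ideal_pow I (m + k)}" "d \<in> I" for k c d
      using ideal_pow_SucI[of "a * c" I "m + k" d] that by (simp add: mult.assoc)
  qed
  then show ?thesis using b by blast
qed

lemma power_in_ideal_pow: "g \<in> I \<Longrightarrow> g ^ n \<in> ideal_pow I n"
proof (induction n)
  case (Suc n)
  then show ?case using ideal_pow_SucI[of "g ^ n" I n g] by (simp add: mult.commute)
qed simp

lemma prime_ideal_mult_notin:
  "is_prime_ideal P \<Longrightarrow> a \<notin> P \<Longrightarrow> b \<notin> P \<Longrightarrow> a * b \<notin> P"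
  unfolding is_prime_ideal_def by blast

lemma prime_ideal_power_notin:
  assumes P: "is_prime_ideal P" and a: "a \<notin> P"
  shows "a ^ n \<notin> P"
proof (induction n)
  case 0
  then show ?case using P ideal_eq_UNIV_if_one unfolding is_prime_ideal_def by auto
next
  case (Suc n)
  then show ?case using prime_ideal_mult_notin[OF P a] by simp
qed

lemma symb_pow_mult:
  assumes I: "is_ideal I" and f: "f \<in> symb_pow I a" and g: "g \<in> symb_pow I b"
  shows "f * g \<in> symb_pow I (a + b)"
  unfolding symb_pow_def
proof (intro InterI, clarsimp)
  fix P assume P: "P \<in> ass I"
  then have "is_prime_ideal P" unfolding ass_def by auto
  obtain s where s: "s \<notin> P" "s * f \<in> ideal_pow I a"
    using f P unfolding symb_pow_def by blast
  obtain t where t: "t \<notin> P" "t * g \<in> ideal_pow I b"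
    using g P unfolding symb_pow_def by blast
  have "(s * f) * (t * g) \<in> ideal_pow I (a + b)"
    using ideal_pow_mult[OF I s(2) t(2)] .
  moreover have "s * t \<notin> P"
    using prime_ideal_mult_notin[OF \<open>is_prime_ideal P\<close> s(1) t(1)] .
  ultimately show "\<exists>s. s \<notin> P \<and> s * (f * g) \<in> ideal_pow I (a + b)"
    by (intro exI[of _ "s * t"]) (simp add: ac_simps)
qed

section \<open>Evaluating polynomials in three variables\<close>

definition is_ring_hom :: "('a::comm_ring_1 \<Rightarrow> 'b::comm_ring_1) \<Rightarrow> bool" where
  "is_ring_hom \<phi> \<longleftrightarrow> \<phi> 0 = 0 \<and> \<phi> 1 = 1 \<and> (\<forall>x y. \<phi> (x + y) = \<phi> x + \<phi> y)
     \<and> (\<forall>x y. \<phi> (x * y) = \<phi> x * \<phi> y)"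

lemma is_ring_homD:
  assumes "is_ring_hom \<phi>"
  shows "\<phi> 0 = 0" "\<phi> 1 = 1" "\<phi> (x + y) = \<phi> x + \<phi> y" "\<phi> (x * y) = \<phi> x * \<phi> y"
  using assms unfolding is_ring_hom_def by auto

lemma ring_hom_uminus: "is_ring_hom \<phi> \<Longrightarrow> \<phi> (- x) = - \<phi> x"
  using is_ring_homD(3)[of \<phi> x "-x"] is_ring_homD(1)[of \<phi>]
  by (simp add: eq_neg_iff_add_eq_0 add.commute)

lemma ring_hom_diff: "is_ring_hom \<phi> \<Longrightarrow> \<phi> (x - y) = \<phi> x - \<phi> y"
  using is_ring_homD(3)[of \<phi> x "-y"] ring_hom_uminus[of \<phi> y] by simp

lemma ring_hom_power: "is_ring_hom \<phi> \<Longrightarrow> \<phi> (x ^ n) = \<phi> x ^ n"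
  by (induction n) (auto simp: is_ring_homD)

lemma ring_hom_sum: "is_ring_hom \<phi> \<Longrightarrow> \<phi> (sum f A) = (\<Sum>a\<in>A. \<phi> (f a))"
  by (induction A rule: infinite_finite_induct) (auto simp: is_ring_homD)

lemma ring_hom_numeral: "is_ring_hom \<phi> \<Longrightarrow> \<phi> (numeral n) = numeral n"
proof -
  assume h: "is_ring_hom \<phi>"
  have "\<phi> (of_nat k) = of_nat k" for k
    by (induction k) (auto simp: is_ring_homD[OF h])
  from this[of "numeral n"] show ?thesis by simp
qed

lemma is_ring_hom_id: "is_ring_hom (\<lambda>x. x)"
  unfolding is_ring_hom_def by simp

lemma is_ring_hom_const_poly: "is_ring_hom (\<lambda>c. [:c:])"
  unfolding is_ring_hom_def by (simp add: one_pCons)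

lemma is_ring_hom_comp: "is_ring_hom \<phi> \<Longrightarrow> is_ring_hom \<psi> \<Longrightarrow> is_ring_hom (\<psi> \<circ> \<phi>)"
  unfolding is_ring_hom_def by simp

lemma is_ring_hom_map_poly:
  assumes h: "is_ring_hom \<phi>"
  shows "is_ring_hom (map_poly \<phi>)"
proof -
  have "map_poly \<phi> (p + q) = map_poly \<phi> p + map_poly \<phi> q" for p q
    by (intro poly_eqI) (simp add: coeff_map_poly is_ring_homD[OF h])
  moreover have "map_poly \<phi> (p * q) = map_poly \<phi> p * map_poly \<phi> q" for p q
    by (intro poly_eqI)
      (simp add: coeff_map_poly is_ring_homD[OF h] coeff_mult ring_hom_sum[OF h])
  ultimately show ?thesis
    unfolding is_ring_hom_def by (simp add: is_ring_homD[OF h])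
qed

lemma is_ring_hom_poly: "is_ring_hom (\<lambda>p. poly p a)"
  unfolding is_ring_hom_def by simp

lemma is_ring_hom_poly_map_poly: "is_ring_hom \<phi> \<Longrightarrow> is_ring_hom (\<lambda>p. poly (map_poly \<phi> p) a)"
  using is_ring_hom_comp[OF is_ring_hom_map_poly is_ring_hom_poly, of \<phi> a] by (simp add: o_def)

lemma ring_hom_poly:
  assumes h: "is_ring_hom \<psi>"
  shows "\<psi> (poly p x) = poly (map_poly \<psi> p) (\<psi> x)"
  by (induction p) (simp_all add: map_poly_pCons is_ring_homD[OF h])

text \<open>Substitution of a, b, c for x, y, z, with h applied to the complex coefficients.\<close>

definition eval3 :: "(complex \<Rightarrow> 'a::comm_ring_1) \<Rightarrow> 'a \<Rightarrow> 'a \<Rightarrow> 'a \<Rightarrow> cpoly3 \<Rightarrow> 'a" where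
  "eval3 h a b c f = poly (map_poly (\<lambda>q. poly (map_poly (\<lambda>p. poly (map_poly h p) a) q) b) f) c"

lemma is_ring_hom_eval3: "is_ring_hom h \<Longrightarrow> is_ring_hom (eval3 h a b c)"
  unfolding eval3_def[abs_def] by (intro is_ring_hom_poly_map_poly)

lemma ring_hom_eval3:
  assumes h: "is_ring_hom h" and \<psi>: "is_ring_hom \<psi>"
  shows "\<psi> (eval3 h a b c f) = eval3 (\<psi> \<circ> h) (\<psi> a) (\<psi> b) (\<psi> c) f"
proof -
  let ?p1 = "\<lambda>p. poly (map_poly h p) a"
  let ?p2 = "\<lambda>q. poly (map_poly ?p1 q) b"
  let ?p1' = "\<lambda>p. poly (map_poly (\<psi> \<circ> h) p) (\<psi> a)"
  let ?p2' = "\<lambda>q. poly (map_poly ?p1' q) (\<psi> b)"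
  have r1: "is_ring_hom ?p1" by (rule is_ring_hom_poly_map_poly[OF h])
  have r2: "is_ring_hom ?p2" by (rule is_ring_hom_poly_map_poly[OF r1])
  have c1: "\<psi> \<circ> ?p1 = ?p1'"
    by (simp add: o_def ring_hom_poly[OF \<psi>] map_poly_map_poly is_ring_homD[OF h] is_ring_homD[OF \<psi>])
  have c2: "\<psi> \<circ> ?p2 = ?p2'"
  proof
    fix q
    have "(\<psi> \<circ> ?p2) q = poly (map_poly (\<psi> \<circ> ?p1) q) (\<psi> b)"
      by (simp add: ring_hom_poly[OF \<psi>] map_poly_map_poly is_ring_homD[OF r1] is_ring_homD[OF \<psi>])
    then show "(\<psi> \<circ> ?p2) q = ?p2' q" by (simp only: c1)
  qed
  have "\<psi> (eval3 h a b c f) = poly (map_poly (\<psi> \<circ> ?p2) f) (\<psi> c)"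
    unfolding eval3_def
    by (simp add: ring_hom_poly[OF \<psi>] map_poly_map_poly is_ring_homD[OF r2] is_ring_homD[OF \<psi>])
  then show ?thesis unfolding eval3_def by (simp only: c2)
qed

context
  fixes h :: "complex \<Rightarrow> 'a::comm_ring_1" and a b c :: 'a
  assumes h: "is_ring_hom h"
begin

lemma eval3_simps [simp]:
  "eval3 h a b c (f + g) = eval3 h a b c f + eval3 h a b c g"
  "eval3 h a b c (f * g) = eval3 h a b c f * eval3 h a b c g"
  "eval3 h a b c (f - g) = eval3 h a b c f - eval3 h a b c g"
  "eval3 h a b c (- f) = - eval3 h a b c f"
  "eval3 h a b c (f ^ n) = eval3 h a b c f ^ n"
  "eval3 h a b c 1 = 1" "eval3 h a b c 0 = 0"
  "eval3 h a b c (numeral w) = numeral w"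
  "eval3 h a b c X = a" "eval3 h a b c Y = b" "eval3 h a b c Z = c"
  "eval3 h a b c [:[:[:x:]:]:] = h x"
  using is_ring_homD[OF is_ring_hom_eval3[OF h]] ring_hom_diff[OF is_ring_hom_eval3[OF h]]
    ring_hom_uminus[OF is_ring_hom_eval3[OF h]] ring_hom_power[OF is_ring_hom_eval3[OF h]]
    ring_hom_numeral[OF is_ring_hom_eval3[OF h]]
  by (simp_all add: eval3_def X_def Y_def Z_def map_poly_pCons is_ring_homD[OF h])

lemma eval3_sum: "eval3 h a b c (sum f A) = (\<Sum>x\<in>A. eval3 h a b c (f x))"
  using ring_hom_sum[OF is_ring_hom_eval3[OF h]] by blast

end

type_synonym pt = "complex \<times> complex \<times> complex"

definition px :: "pt \<Rightarrow> complex" where "px v = fst v"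
definition py :: "pt \<Rightarrow> complex" where "py v = fst (snd v)"
definition pz :: "pt \<Rightarrow> complex" where "pz v = snd (snd v)"

lemma pt_coord_simps [simp]: "px (a, b, c) = a" "py (a, b, c) = b" "pz (a, b, c) = c"
  by (simp_all add: px_def py_def pz_def)

definition pt_comb :: "complex \<Rightarrow> pt \<Rightarrow> complex \<Rightarrow> pt \<Rightarrow> pt" where
  "pt_comb s a t b = (s * px a + t * px b, s * py a + t * py b, s * pz a + t * pz b)"

definition pt_scale :: "complex \<Rightarrow> pt \<Rightarrow> pt" where
  "pt_scale s a = (s * px a, s * py a, s * pz a)"

lemma pt_comb_simps [simp]:
  "px (pt_comb s a t b) = s * px a + t * px b"
  "py (pt_comb s a t b) = s * py a + t * py b"
  "pz (pt_comb s a t b) = s * pz a + t * pz b"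
  by (simp_all add: pt_comb_def)

lemma pt_scale_simps [simp]:
  "px (pt_scale s a) = s * px a" "py (pt_scale s a) = s * py a" "pz (pt_scale s a) = s * pz a"
  by (simp_all add: pt_scale_def)

lemma pt_eqI: "px a = px b \<Longrightarrow> py a = py b \<Longrightarrow> pz a = pz b \<Longrightarrow> a = b"
  by (cases a; cases b) (simp add: px_def py_def pz_def)

lemma pt_comb_1_0 [simp]: "pt_comb 1 a 0 b = a"
  by (rule pt_eqI) simp_all

lemma pt_scale_1 [simp]: "pt_scale 1 p = p"
  by (rule pt_eqI) simp_all

definition val :: "cpoly3 \<Rightarrow> pt \<Rightarrow> complex" where
  "val f v = eval3 (\<lambda>x. x) (px v) (py v) (pz v) f"

definition const3 :: "complex \<Rightarrow> cpoly3" where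
  "const3 c = [:[:[:c:]:]:]"

lemma val_simps [simp]:
  "val (f + g) v = val f v + val g v" "val (f * g) v = val f v * val g v"
  "val (f - g) v = val f v - val g v" "val (- f) v = - val f v"
  "val (f ^ n) v = val f v ^ n" "val 1 v = 1" "val 0 v = 0" "val (numeral w) v = numeral w"
  "val X v = px v" "val Y v = py v" "val Z v = pz v" "val (const3 c) v = c"
  unfolding val_def const3_def by (simp_all add: is_ring_hom_id)

lemma val_sum: "val (sum f A) v = (\<Sum>x\<in>A. val (f x) v)"
  unfolding val_def by (simp add: eval3_sum is_ring_hom_id)

text \<open>The restriction of f to the line \<open>u \<mapsto> a + u b\<close>, as a polynomial in u.\<close>

definition line_poly :: "pt \<Rightarrow> pt \<Rightarrow> cpoly3 \<Rightarrow> complex poly" where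
  "line_poly a b f = eval3 (\<lambda>c. [:c:]) [:px a, px b:] [:py a, py b:] [:pz a, pz b:] f"

lemma line_poly_simps [simp]:
  "line_poly a b (f + g) = line_poly a b f + line_poly a b g"
  "line_poly a b (f * g) = line_poly a b f * line_poly a b g"
  "line_poly a b (f - g) = line_poly a b f - line_poly a b g"
  "line_poly a b (- f) = - line_poly a b f"
  "line_poly a b (f ^ n) = line_poly a b f ^ n"
  "line_poly a b 1 = 1" "line_poly a b 0 = 0" "line_poly a b (numeral w) = numeral w"
  "line_poly a b X = [:px a, px b:]" "line_poly a b Y = [:py a, py b:]"
  "line_poly a b Z = [:pz a, pz b:]" "line_poly a b (const3 c) = [:c:]"
  unfolding line_poly_def const3_def by (simp_all add: is_ring_hom_const_poly)

lemma line_poly_sum: "line_poly a b (sum f A) = (\<Sum>x\<in>A. line_poly a b (f x))"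
  unfolding line_poly_def by (simp add: eval3_sum is_ring_hom_const_poly)

lemma poly_line_poly: "poly (line_poly a b f) u = val f (pt_comb 1 a u b)"
proof -
  have "poly (line_poly a b f) u = eval3 ((\<lambda>p. poly p u) \<circ> (\<lambda>c. [:c:])) (poly [:px a, px b:] u)
      (poly [:py a, py b:] u) (poly [:pz a, pz b:] u) f"
    unfolding line_poly_def by (rule ring_hom_eval3[OF is_ring_hom_const_poly is_ring_hom_poly])
  then show ?thesis unfolding val_def by (simp add: o_def algebra_simps)
qed

lemma poly_line_poly_0: "poly (line_poly a b f) 0 = val f a"
  by (simp add: poly_line_poly)

lemma poly_line_poly_origin: "poly (line_poly (0, 0, 0) b f) u = val f (pt_scale u b)"
proof -
  have "pt_comb 1 (0, 0, 0) u b = pt_scale u b" by (rule pt_eqI) simp_all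
  then show ?thesis by (simp add: poly_line_poly)
qed

lemma poly_zero_if_vanishes_off_0:
  fixes P :: "complex poly"
  assumes "\<And>t. t \<noteq> 0 \<Longrightarrow> poly P t = 0"
  shows "P = 0"
proof (rule ccontr)
  assume "P \<noteq> 0"
  then have "finite {x. poly P x = 0}" by (rule poly_roots_finite)
  moreover have "UNIV - {0} \<subseteq> {x. poly P x = 0}" using assms by auto
  ultimately have "finite (UNIV - {0::complex})" by (rule rev_finite_subset)
  then show False by (simp add: infinite_UNIV_char_0)
qed

lemma poly_eq_if_agree_off_0:
  fixes P Q :: "complex poly"
  assumes "\<And>t. t \<noteq> 0 \<Longrightarrow> poly P t = poly Q t"
  shows "P = Q"
  using poly_zero_if_vanishes_off_0[of "P - Q"] assms by auto

definition eval2 :: "complex \<Rightarrow> complex \<Rightarrow> complex poly poly \<Rightarrow> complex" where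
  "eval2 x y q = poly (map_poly (\<lambda>p. poly p x) q) y"

lemma is_ring_hom_eval2: "is_ring_hom (eval2 x y)"
  unfolding eval2_def[abs_def] by (rule is_ring_hom_poly_map_poly[OF is_ring_hom_poly])

lemma eval2_0_1 [simp]: "eval2 x y 0 = 0" "eval2 x y 1 = 1"
  using is_ring_homD(1,2)[OF is_ring_hom_eval2] by simp_all

lemma eval2_pCons: "eval2 x y (pCons a p) = poly a x + y * eval2 x y p"
  unfolding eval2_def by (simp add: map_poly_pCons)

lemma val_eq_eval2: "val f v = poly (map_poly (eval2 (px v) (py v)) f) (pz v)"
  unfolding val_def eval3_def eval2_def by simp

lemma val_pCons: "val (pCons a p) v = eval2 (px v) (py v) a + pz v * val p v"
  by (simp add: val_eq_eval2 map_poly_pCons)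

lemma coeff_map_eval2_eq_0:
  assumes "map_poly (eval2 x y) h = 0"
  shows "eval2 x y (coeff h k) = 0"
  using assms by (metis coeff_0 coeff_map_poly eval2_0_1(1))

lemma eval2_zero_imp_zero:
  assumes "\<And>x y. eval2 x y q = 0"
  shows "q = 0"
proof -
  have "map_poly (\<lambda>p. poly p x) q = 0" for x
    using assms unfolding eval2_def by (simp add: poly_all_0_iff_0[symmetric])
  then have "poly (coeff q j) x = 0" for j x
    by (metis coeff_0 coeff_map_poly poly_0)
  then have "coeff q j = 0" for j
    using poly_all_0_iff_0 by blast
  then show ?thesis by (simp add: poly_eq_iff)
qed

lemma val_zero_imp_zero:
  assumes "\<And>v. val f v = 0"
  shows "f = 0"
proof -
  have "map_poly (eval2 x y) f = 0" for x y
    using assms[of "(x, y, _)"] by (simp add: val_eq_eval2 poly_all_0_iff_0[symmetric])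
  then show ?thesis
    using eval2_zero_imp_zero coeff_map_eval2_eq_0 by (simp add: poly_eq_iff)
qed

lemma val_eqI: "(\<And>v. val f v = val g v) \<Longrightarrow> f = g"
  using val_zero_imp_zero[of "f - g"] by auto

section \<open>Monomial expansion\<close>

definition deg_bounded :: "cpoly3 \<Rightarrow> nat \<Rightarrow> bool" where
  "deg_bounded f N \<longleftrightarrow> degree f \<le> N \<and> (\<forall>k. degree (coeff f k) \<le> N)
     \<and> (\<forall>k j. degree (coeff (coeff f k) j) \<le> N)"

lemma deg_bounded_exists: "\<exists>N. deg_bounded f N"
proof -
  define A where "A = Max ((\<lambda>k. degree (coeff f k)) ` {..degree f})"
  define B where "B = Max ((\<lambda>(k, j). degree (coeff (coeff f k) j)) ` ({..degree f} \<times> {..A}))"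
  have A: "degree (coeff f k) \<le> A" for k
    by (cases "k \<le> degree f") (auto simp: A_def coeff_eq_0)
  have B: "degree (coeff (coeff f k) j) \<le> B" for k j
  proof (cases "k \<le> degree f \<and> j \<le> A")
    case True
    then show ?thesis unfolding B_def by (intro Max_ge) auto
  next
    case False
    then have "coeff (coeff f k) j = 0"
      using A[of k] by (metis coeff_0 coeff_eq_0 le_trans not_le_imp_less)
    then show ?thesis by simp
  qed
  show ?thesis using A B unfolding deg_bounded_def
    by (intro exI[of _ "degree f + A + B"]) (metis add.commute le_add2 le_trans trans_le_add1)
qed

lemma poly_eq_sum_atMost:
  fixes p :: "complex poly"
  assumes "degree p \<le> N"
  shows "poly p x = (\<Sum>i\<le>N. coeff p i * x ^ i)"
  unfolding poly_altdef
  by (rule sum.mono_neutral_left) (use assms in \<open>auto simp: coeff_eq_0\<close>)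

definition mono_at :: "nat \<times> nat \<times> nat \<Rightarrow> cpoly3" where
  "mono_at m = (case m of (i, j, k) \<Rightarrow> X ^ i * Y ^ j * Z ^ k)"

definition coeff_at :: "cpoly3 \<Rightarrow> nat \<times> nat \<times> nat \<Rightarrow> complex" where
  "coeff_at f m = (case m of (i, j, k) \<Rightarrow> coeff3 f i j k)"

definition cube :: "nat \<Rightarrow> (nat \<times> nat \<times> nat) set" where
  "cube N = {..N} \<times> {..N} \<times> {..N}"

lemma sum_nested_eq_sum_cube:
  fixes c :: "nat \<Rightarrow> nat \<Rightarrow> nat \<Rightarrow> complex"
  shows "(\<Sum>k\<le>N. (\<Sum>j\<le>N. (\<Sum>i\<le>N. c i j k * x ^ i) * y ^ j) * z ^ k)
     = (\<Sum>(i,j,k)\<in>cube N. c i j k * x ^ i * y ^ j * z ^ k)"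
proof -
  have "(\<Sum>k\<le>N. (\<Sum>j\<le>N. (\<Sum>i\<le>N. c i j k * x ^ i) * y ^ j) * z ^ k)
      = (\<Sum>k\<le>N. \<Sum>j\<le>N. \<Sum>i\<le>N. c i j k * x ^ i * y ^ j * z ^ k)"
    by (simp add: sum_distrib_right)
  also have "\<dots> = (\<Sum>k\<le>N. \<Sum>i\<le>N. \<Sum>j\<le>N. c i j k * x ^ i * y ^ j * z ^ k)"
    by (intro sum.cong refl sum.swap)
  also have "\<dots> = (\<Sum>i\<le>N. \<Sum>k\<le>N. \<Sum>j\<le>N. c i j k * x ^ i * y ^ j * z ^ k)"
    by (rule sum.swap)
  also have "\<dots> = (\<Sum>i\<le>N. \<Sum>j\<le>N. \<Sum>k\<le>N. c i j k * x ^ i * y ^ j * z ^ k)"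
    by (intro sum.cong refl sum.swap)
  also have "\<dots> = (\<Sum>(i,j,k)\<in>cube N. c i j k * x ^ i * y ^ j * z ^ k)"
    unfolding cube_def by (simp add: sum.cartesian_product)
  finally show ?thesis .
qed

lemma val_expand:
  assumes N: "deg_bounded f N"
  shows "val f v = (\<Sum>(i,j,k)\<in>cube N. coeff3 f i j k * px v ^ i * py v ^ j * pz v ^ k)"
proof -
  have inner: "eval2 (px v) (py v) (coeff f k)
      = (\<Sum>j\<le>N. (\<Sum>i\<le>N. coeff3 f i j k * px v ^ i) * py v ^ j)" for k
  proof -
    have "degree (map_poly (\<lambda>p. poly p (px v)) (coeff f k)) \<le> N"
      using N unfolding deg_bounded_def by (auto intro: le_trans[OF map_poly_degree_leq])
    then show ?thesis
      unfolding eval2_def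
      apply (subst poly_eq_sum_atMost, assumption)
      apply (intro sum.cong refl)
      apply (subst coeff_map_poly, simp)
      apply (subst poly_eq_sum_atMost[of _ N])
      using N unfolding deg_bounded_def coeff3_def by auto
  qed
  have "val f v = (\<Sum>k\<le>N. eval2 (px v) (py v) (coeff f k) * pz v ^ k)"
    unfolding val_eq_eval2 using N unfolding deg_bounded_def
    by (subst poly_eq_sum_atMost[of _ N])
      (auto intro: le_trans[OF map_poly_degree_leq] simp: coeff_map_poly)
  also have "\<dots> = (\<Sum>(i,j,k)\<in>cube N. coeff3 f i j k * px v ^ i * py v ^ j * pz v ^ k)"
    unfolding inner by (rule sum_nested_eq_sum_cube)
  finally show ?thesis .
qed

lemma monomial_expansion:
  assumes "deg_bounded f N"
  shows "f = (\<Sum>m\<in>cube N. const3 (coeff_at f m) * mono_at m)"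
proof (rule val_eqI)
  fix v
  show "val f v = val (\<Sum>m\<in>cube N. const3 (coeff_at f m) * mono_at m) v"
    unfolding val_expand[OF assms] val_sum
    by (intro sum.cong refl) (auto simp: mono_at_def coeff_at_def mult_ac)
qed

section \<open>J is the ideal of seven points\<close>

definition g1 :: cpoly3 where "g1 = Y * Z * (Y - Z)"
definition g2 :: cpoly3 where "g2 = Z * X * (Z - X)"
definition g3 :: cpoly3 where "g3 = X * Y * (X - Y)"

lemma Jideal_eq: "Jideal = ideal_gen {g1, g2, g3}"
  unfolding Jideal_def g1_def g2_def g3_def ..

lemma is_ideal_J: "is_ideal Jideal"
  unfolding Jideal_def by (rule is_ideal_ideal_gen)

lemma gens_in_J: "g1 \<in> Jideal" "g2 \<in> Jideal" "g3 \<in> Jideal"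
  unfolding Jideal_eq using ideal_gen_subset[of "{g1, g2, g3}"] by auto

definition point :: "nat \<Rightarrow> pt" where
  "point i = (if i = 0 then (1,0,0) else if i = 1 then (0,1,0) else if i = 2 then (0,0,1)
     else if i = 3 then (1,1,1) else if i = 4 then (0,1,1) else if i = 5 then (1,0,1) else (1,1,0))"

lemma point_simps [simp]:
  "point 0 = (1,0,0)" "point 1 = (0,1,0)" "point (Suc 0) = (0,1,0)" "point 2 = (0,0,1)"
  "point (Suc (Suc 0)) = (0,0,1)" "point 3 = (1,1,1)" "point 4 = (0,1,1)" "point 5 = (1,0,1)"
  "point 6 = (1,1,0)"
  by (simp_all add: point_def)

lemma less_7_cases: "(i::nat) < 7 \<Longrightarrow> i = 0 \<or> i = 1 \<or> i = 2 \<or> i = 3 \<or> i = 4 \<or> i = 5 \<or> i = 6"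
  by auto

text \<open>A point of the projective plane is a line through the origin of \<open>\<complex>\<^sup>3\<close>.\<close>

definition vanish_ideal :: "cpoly3 set" where
  "vanish_ideal = {f. \<forall>i<7. \<forall>t. val f (pt_scale t (point i)) = 0}"

lemma is_ideal_vanish_ideal: "is_ideal vanish_ideal"
  unfolding is_ideal_def vanish_ideal_def by auto

lemma J_subset_vanish_ideal: "Jideal \<subseteq> vanish_ideal"
  unfolding Jideal_eq
proof (rule ideal_gen_minimal[OF is_ideal_vanish_ideal])
  have "val g (pt_scale t (point i)) = 0" if "g \<in> {g1, g2, g3}" "i < 7" for g i t
    using that unfolding g1_def g2_def g3_def
    by (elim less_7_cases[elim_format] disjE insertE emptyE) simp_all
  then show "{g1, g2, g3} \<subseteq> vanish_ideal"
    unfolding vanish_ideal_def by blast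
qed

text \<open>Modulo J, monomials of equal degree and equal support are congruent.\<close>

lemma shift_exponent_mod:
  assumes I: "is_ideal I" and ab: "a * b * (a - b) \<in> I"
  shows "a ^ Suc i * b ^ Suc j * c - a ^ (Suc i + j) * b * c \<in> I"
proof (induction j arbitrary: i)
  case 0
  then show ?case using ideal_zero[OF I] by simp
next
  case (Suc j)
  have eq: "a ^ Suc i * b ^ Suc (Suc j) * c - a ^ Suc (Suc i) * b ^ Suc j * c
      = (- (a ^ i * b ^ j * c)) * (a * b * (a - b))"
    by (simp add: algebra_simps)
  have "a ^ Suc i * b ^ Suc (Suc j) * c - a ^ Suc (Suc i) * b ^ Suc j * c \<in> I"
    unfolding eq by (rule ideal_mult_left[OF I ab])
  from ideal_add[OF I this Suc.IH[of "Suc i"]] show ?case by simp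
qed

definition exp_deg :: "nat \<times> nat \<times> nat \<Rightarrow> nat" where
  "exp_deg m = (case m of (i, j, k) \<Rightarrow> i + j + k)"

definition exp_supp :: "nat \<times> nat \<times> nat \<Rightarrow> bool \<times> bool \<times> bool" where
  "exp_supp m = (case m of (i, j, k) \<Rightarrow> (0 < i, 0 < j, 0 < k))"

text \<open>The normal form pushes all but at most one power of y and z into the first variable present.\<close>

definition normal_exp :: "nat \<times> nat \<times> nat \<Rightarrow> nat \<times> nat \<times> nat" where
  "normal_exp m = (case m of (i, j, k) \<Rightarrow>
     if i > 0 then (i + j + k - min j 1 - min k 1, min j 1, min k 1)
     else if j > 0 then (0, j + k - min k 1, min k 1) else (0, 0, k))"

lemma normal_exp_eq_iff:
  "normal_exp m = normal_exp m' \<longleftrightarrow> exp_deg m = exp_deg m' \<and> exp_supp m = exp_supp m'"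
  by (cases m; cases m') (auto simp: normal_exp_def exp_deg_def exp_supp_def split: if_splits)

lemma normal_exp_idem: "normal_exp (normal_exp m) = normal_exp m"
  by (cases m) (auto simp: normal_exp_def split: if_splits)

lemma mono_at_normal_exp_mod_J: "mono_at m - mono_at (normal_exp m) \<in> Jideal"
proof (cases m)
  case (fields i j k)
  have gX: "X * Y * (X - Y) \<in> Jideal" and gZ: "X * Z * (X - Z) \<in> Jideal"
    and gY: "Y * Z * (Y - Z) \<in> Jideal"
    using gens_in_J ideal_mult_left[OF is_ideal_J gens_in_J(2), of "-1"]
    by (auto simp: g1_def g2_def g3_def algebra_simps)
  have Y_to_X:
    "X ^ Suc i * Y ^ j * Z ^ k - X ^ (Suc i + j - min j 1) * Y ^ min j 1 * Z ^ k \<in> Jideal" for i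
    using shift_exponent_mod[OF is_ideal_J gX, of i "j - 1" "Z ^ k"] ideal_zero[OF is_ideal_J]
    by (cases j) auto
  have Z_to_X: "X ^ Suc i * Y ^ j' * Z ^ k - X ^ (Suc i + k - min k 1) * Y ^ j' * Z ^ min k 1
      \<in> Jideal" for i j'
    using shift_exponent_mod[OF is_ideal_J gZ, of i "k - 1" "Y ^ j'"] ideal_zero[OF is_ideal_J]
    by (cases k) (auto simp: mult_ac)
  have Z_to_Y: "Y ^ Suc j' * Z ^ k - Y ^ (Suc j' + k - min k 1) * Z ^ min k 1 \<in> Jideal" for j'
    using shift_exponent_mod[OF is_ideal_J gY, of j' "k - 1" 1] ideal_zero[OF is_ideal_J]
    by (cases k) auto
  show ?thesis
  proof (cases i)
    case (Suc i')
    have "X ^ (Suc i' + j - min j 1) = X ^ Suc (i' + j - min j 1)"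
      by (cases j) auto
    then have "X ^ (Suc i' + j - min j 1) * Y ^ min j 1 * Z ^ k
        - X ^ (Suc i' + j + k - min j 1 - min k 1) * Y ^ min j 1 * Z ^ min k 1 \<in> Jideal"
      using Z_to_X[of "i' + j - min j 1" "min j 1"] by (cases j; cases k) auto
    from ideal_add[OF is_ideal_J Y_to_X[of i'] this] show ?thesis
      using fields Suc by (simp add: mono_at_def normal_exp_def)
  next
    case 0
    then show ?thesis
      using fields Z_to_Y ideal_zero[OF is_ideal_J]
      by (cases j) (auto simp: mono_at_def normal_exp_def)
  qed
qed

lemma line_poly_origin_monomial:
  "line_poly (0, 0, 0) p (const3 c * mono_at m)
     = monom (c * px p ^ fst m * py p ^ fst (snd m) * pz p ^ snd (snd m)) (exp_deg m)"
proof (cases m)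
  case (fields i j k)
  have lin: "[:0, a:] = monom a 1" for a :: complex
    by (simp add: monom_Suc monom_0)
  have "line_poly (0, 0, 0) p (const3 c * mono_at m)
      = monom c 0 * monom (px p) 1 ^ i * monom (py p) 1 ^ j * monom (pz p) 1 ^ k"
    using fields by (simp add: mono_at_def mult_ac lin monom_0)
  also have "\<dots> = monom (c * px p ^ i * py p ^ j * pz p ^ k) (i + j + k)"
    by (simp only: monom_power mult_monom) simp
  finally show ?thesis using fields by (simp add: exp_deg_def)
qed

definition term_at :: "pt \<Rightarrow> nat \<Rightarrow> cpoly3 \<Rightarrow> nat \<times> nat \<times> nat \<Rightarrow> complex" where
  "term_at p e f m = (if exp_deg m = e
     then coeff_at f m * px p ^ fst m * py p ^ fst (snd m) * pz p ^ snd (snd m) else 0)"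

lemma vanish_ideal_homogeneous_part:
  assumes f: "f \<in> vanish_ideal" and N: "deg_bounded f N" and t: "t < 7"
  shows "(\<Sum>m\<in>cube N. term_at (point t) e f m) = 0"
proof -
  have "poly (line_poly (0, 0, 0) (point t) f) u = 0" for u
    using f t unfolding vanish_ideal_def by (simp add: poly_line_poly_origin)
  then have "line_poly (0, 0, 0) (point t) f = 0"
    by (simp add: poly_all_0_iff_0[symmetric])
  moreover have "line_poly (0, 0, 0) (point t) f
      = (\<Sum>m\<in>cube N. line_poly (0, 0, 0) (point t) (const3 (coeff_at f m) * mono_at m))"
    by (subst monomial_expansion[OF N]) (simp add: line_poly_sum)
  ultimately have
    "coeff (\<Sum>m\<in>cube N. line_poly (0, 0, 0) (point t) (const3 (coeff_at f m) * mono_at m)) e = 0"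
    by simp
  then show ?thesis
    unfolding coeff_sum line_poly_origin_monomial by (simp add: term_at_def if_distrib)
qed

definition supp_part :: "bool \<times> bool \<times> bool \<Rightarrow> nat \<Rightarrow> cpoly3 \<Rightarrow> nat \<times> nat \<times> nat \<Rightarrow> complex"
  where "supp_part S e f m = (if exp_deg m = e \<and> exp_supp m = S then coeff_at f m else 0)"

text \<open>
  At the point with coordinates \<open>[x \<in> T], [y \<in> T], [z \<in> T]\<close> a monomial takes the value
  \<open>[supp \<subseteq> T]\<close>, so the part of given support is recovered by inclusion-exclusion.
\<close>

lemma supp_part_inclusion_exclusion:
  "supp_part (True, True, True) e f m
    = term_at (1,1,1) e f m - term_at (1,1,0) e f m - term_at (1,0,1) e f m - term_at (0,1,1) e f m
      + term_at (1,0,0) e f m + term_at (0,1,0) e f m + term_at (0,0,1) e f m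
      - term_at (0,0,0) e f m"
  "supp_part (True, True, False) e f m
    = term_at (1,1,0) e f m - term_at (1,0,0) e f m - term_at (0,1,0) e f m + term_at (0,0,0) e f m"
  "supp_part (True, False, True) e f m
    = term_at (1,0,1) e f m - term_at (1,0,0) e f m - term_at (0,0,1) e f m + term_at (0,0,0) e f m"
  "supp_part (False, True, True) e f m
    = term_at (0,1,1) e f m - term_at (0,1,0) e f m - term_at (0,0,1) e f m + term_at (0,0,0) e f m"
  "supp_part (True, False, False) e f m = term_at (1,0,0) e f m - term_at (0,0,0) e f m"
  "supp_part (False, True, False) e f m = term_at (0,1,0) e f m - term_at (0,0,0) e f m"
  "supp_part (False, False, True) e f m = term_at (0,0,1) e f m - term_at (0,0,0) e f m"
  "supp_part (False, False, False) e f m = term_at (0,0,0) e f m"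
  by (auto simp: supp_part_def term_at_def exp_deg_def exp_supp_def power_0_left split: prod.splits)

text \<open>
  The origin, standing for the empty T, only sees the constant term, as does the point (1, 0, 0).
\<close>

lemma term_at_origin: "term_at (0, 0, 0) e f m = (if e = 0 then term_at (1, 0, 0) e f m else 0)"
  by (auto simp: term_at_def exp_deg_def power_0_left split: prod.splits)

lemma vanish_ideal_supp_part:
  assumes f: "f \<in> vanish_ideal" and N: "deg_bounded f N"
  shows "(\<Sum>m\<in>cube N. supp_part S e f m) = 0"
proof -
  have "(\<Sum>m\<in>cube N. term_at (point t) e f m) = 0" if "t < 7" for t
    using vanish_ideal_homogeneous_part[OF f N that] .
  from this[of 0] this[of 1] this[of 2] this[of 3] this[of 4] this[of 5] this[of 6]
  have E: "(\<Sum>m\<in>cube N. term_at (1,0,0) e f m) = 0" "(\<Sum>m\<in>cube N. term_at (0,1,0) e f m) = 0"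
    "(\<Sum>m\<in>cube N. term_at (0,0,1) e f m) = 0" "(\<Sum>m\<in>cube N. term_at (1,1,1) e f m) = 0"
    "(\<Sum>m\<in>cube N. term_at (0,1,1) e f m) = 0" "(\<Sum>m\<in>cube N. term_at (1,0,1) e f m) = 0"
    "(\<Sum>m\<in>cube N. term_at (1,1,0) e f m) = 0"
    by simp_all
  moreover have "(\<Sum>m\<in>cube N. term_at (0,0,0) e f m) = 0"
    using E(1) by (cases "e = 0") (simp_all add: term_at_origin)
  moreover obtain a b c where "S = (a, b, c)" by (cases S)
  ultimately show ?thesis
    by (cases a; cases b; cases c)
      (simp_all add: supp_part_inclusion_exclusion sum.distrib sum_subtractf)
qed

lemma coeff3_const3_mono_at:
  "coeff3 (const3 c * mono_at r) i j k = (if (i, j, k) = r then c else 0)"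
proof -
  have "const3 c * mono_at (a, b, d) = monom (monom (monom c a) b) d" for a b d
  proof -
    have lin: "[:0, 1:] = monom 1 1" by (simp add: monom_Suc monom_0)
    have XYZ: "X = monom (monom (monom 1 1) 0) 0" "Y = monom (monom 1 1) 0" "Z = monom 1 1"
      "const3 c = monom (monom (monom c 0) 0) 0"
      unfolding X_def Y_def Z_def const3_def by (simp_all only: monom_0 lin)
    show ?thesis
      unfolding mono_at_def XYZ by (simp only: monom_power mult_monom) (simp add: mult_monom)
  qed
  then show ?thesis by (cases r) (simp add: coeff3_def)
qed

lemma coeff3_sum: "coeff3 (sum f A) i j k = (\<Sum>x\<in>A. coeff3 (f x) i j k)"
  unfolding coeff3_def by (simp add: coeff_sum)

lemma coeff3_add: "coeff3 (f + g) i j k = coeff3 f i j k + coeff3 g i j k"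
  unfolding coeff3_def by simp

lemma coeff3_diff: "coeff3 (f - g) i j k = coeff3 f i j k - coeff3 g i j k"
  unfolding coeff3_def by simp

lemma coeff3_mult: "coeff3 (f * g) i j k =
  (\<Sum>k1\<le>k. \<Sum>j1\<le>j. \<Sum>i1\<le>i. coeff3 f i1 j1 k1 * coeff3 g (i - i1) (j - j1) (k - k1))"
  unfolding coeff3_def by (simp add: coeff_mult coeff_sum)

lemma coeff3_eqI: "(\<And>i j k. coeff3 f i j k = coeff3 g i j k) \<Longrightarrow> f = g"
  unfolding coeff3_def by (intro poly_eqI) blast

lemma vanish_ideal_normal_form_zero:
  assumes f: "f \<in> vanish_ideal" and N: "deg_bounded f N"
  shows "(\<Sum>m\<in>cube N. const3 (coeff_at f m) * mono_at (normal_exp m)) = 0"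
    (is "?h = 0")
proof (rule coeff3_eqI)
  fix i j k
  have "coeff3 ?h i j k = (\<Sum>m\<in>cube N. if (i, j, k) = normal_exp m then coeff_at f m else 0)"
    unfolding coeff3_sum coeff3_const3_mono_at ..
  also have "\<dots> = 0"
  proof (cases "normal_exp (i, j, k) = (i, j, k)")
    case True
    then have "(\<Sum>m\<in>cube N. if (i, j, k) = normal_exp m then coeff_at f m else 0)
        = (\<Sum>m\<in>cube N. supp_part (exp_supp (i, j, k)) (exp_deg (i, j, k)) f m)"
      unfolding supp_part_def by (intro sum.cong refl) (metis normal_exp_eq_iff)
    also have "\<dots> = 0" by (rule vanish_ideal_supp_part[OF f N])
    finally show ?thesis .
  next
    case False
    then have "(i, j, k) \<noteq> normal_exp m" for m by (metis normal_exp_idem)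
    then show ?thesis by (intro sum.neutral) simp
  qed
  finally show "coeff3 ?h i j k = coeff3 0 i j k" by (simp add: coeff3_def)
qed

lemma vanish_ideal_subset_J: "vanish_ideal \<subseteq> Jideal"
proof
  fix f assume f: "f \<in> vanish_ideal"
  obtain N where N: "deg_bounded f N" using deg_bounded_exists by blast
  have "f = f - (\<Sum>m\<in>cube N. const3 (coeff_at f m) * mono_at (normal_exp m))"
    using vanish_ideal_normal_form_zero[OF f N] by simp
  also have "\<dots> = (\<Sum>m\<in>cube N. const3 (coeff_at f m) * (mono_at m - mono_at (normal_exp m)))"
    by (subst monomial_expansion[OF N]) (simp add: sum_subtractf right_diff_distrib)
  also have "\<dots> \<in> Jideal"
    by (intro ideal_sum[OF is_ideal_J] ideal_mult_left[OF is_ideal_J] mono_at_normal_exp_mod_J)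
  finally show "f \<in> Jideal" .
qed

lemma J_eq_vanish_ideal: "Jideal = vanish_ideal"
  using J_subset_vanish_ideal vanish_ideal_subset_J by blast

section \<open>Associated primes of J\<close>

definition line_ideal :: "pt \<Rightarrow> cpoly3 set" where
  "line_ideal p = {s. line_poly (0, 0, 0) p s = 0}"

lemma line_ideal_iff: "s \<in> line_ideal p \<longleftrightarrow> (\<forall>u. val s (pt_scale u p) = 0)"
  unfolding line_ideal_def by (simp add: poly_all_0_iff_0[symmetric] poly_line_poly_origin)

lemma line_ideal_prime: "is_prime_ideal (line_ideal p)"
proof -
  have "1 \<notin> line_ideal p" by (simp add: line_ideal_def)
  then have "line_ideal p \<noteq> UNIV" by blast
  then show ?thesis
    unfolding is_prime_ideal_def is_ideal_def by (simp add: line_ideal_def)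
qed

lemma vanish_on_line_cancel:
  assumes gf: "\<And>u. val (g * f) (pt_scale u p) = 0"
    and g: "\<And>u. u \<noteq> 0 \<Longrightarrow> val g (pt_scale u p) \<noteq> 0"
  shows "f \<in> line_ideal p"
proof -
  have "val f (pt_scale u p) = 0" if "u \<noteq> 0" for u
    using gf[of u] g[OF that] by simp
  then show ?thesis
    unfolding line_ideal_def
    by (intro CollectI poly_zero_if_vanishes_off_0) (simp add: poly_line_poly_origin)
qed

lemma vanish_ideal_iff_line_ideals: "f \<in> vanish_ideal \<longleftrightarrow> (\<forall>t<7. f \<in> line_ideal (point t))"
  unfolding vanish_ideal_def line_ideal_iff by blast

definition separator :: "nat \<Rightarrow> cpoly3" where
  "separator t = (if t = 0 then X * (X - Y) * (X - Z) else if t = 1 then Y * (Y - X) * (Y - Z)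
    else if t = 2 then Z * (Z - X) * (Z - Y) else if t = 3 then X * Y * Z
    else if t = 4 then Y * Z * (X - Y) else if t = 5 then X * Z * (Y - Z) else X * Y * (X - Z))"

lemma separator_other:
  "t < 7 \<Longrightarrow> t' < 7 \<Longrightarrow> t' \<noteq> t \<Longrightarrow> val (separator t) (pt_scale u (point t')) = 0"
  unfolding separator_def by (elim less_7_cases[elim_format] disjE) simp_all

lemma separator_self: "t < 7 \<Longrightarrow> u \<noteq> 0 \<Longrightarrow> val (separator t) (pt_scale u (point t)) \<noteq> 0"
  unfolding separator_def by (elim less_7_cases[elim_format] disjE) simp_all

lemma line_ideal_eq_colon:
  assumes t: "t < 7"
  shows "line_ideal (point t) = {g. g * separator t \<in> Jideal}"
proof (intro set_eqI iffI; unfold mem_Collect_eq)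
  fix s assume "s \<in> line_ideal (point t)"
  then have "s * separator t \<in> line_ideal (point t')" if "t' < 7" for t'
    using separator_other[OF t that] by (cases "t' = t") (auto simp: line_ideal_iff)
  then show "s * separator t \<in> Jideal"
    by (simp add: J_eq_vanish_ideal vanish_ideal_iff_line_ideals)
next
  fix s assume "s * separator t \<in> Jideal"
  then have "s * separator t \<in> line_ideal (point t)"
    using t by (simp add: J_eq_vanish_ideal vanish_ideal_iff_line_ideals)
  then show "s \<in> line_ideal (point t)"
    using separator_self[OF t] by (intro vanish_on_line_cancel[of "separator t"])
      (auto simp: line_ideal_iff mult.commute)
qed

lemma line_ideal_ass: "t < 7 \<Longrightarrow> line_ideal (point t) \<in> ass Jideal"
  unfolding ass_def using line_ideal_prime line_ideal_eq_colon by blast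

definition ell :: cpoly3 where
  "ell = X + Y + Z"

lemma ell_nonzero_on_points: "t < 7 \<Longrightarrow> u \<noteq> 0 \<Longrightarrow> val ell (pt_scale u (point t)) \<noteq> 0"
  unfolding ell_def by (elim less_7_cases[elim_format] disjE) simp_all

lemma ell_power_notin_ass:
  assumes P: "P \<in> ass Jideal"
  shows "ell ^ n \<notin> P"
proof -
  from P obtain f where prime: "is_prime_ideal P" and Pf: "P = {g. g * f \<in> Jideal}"
    unfolding ass_def by blast
  have "ell \<notin> P"
  proof
    assume "ell \<in> P"
    then have "ell * f \<in> line_ideal (point t)" if "t < 7" for t
      using that Pf by (simp add: J_eq_vanish_ideal vanish_ideal_iff_line_ideals)
    then have "f \<in> line_ideal (point t)" if "t < 7" for t
      using that ell_nonzero_on_points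
      by (intro vanish_on_line_cancel[of ell]) (auto simp: line_ideal_iff)
    then have "1 \<in> P"
      using Pf by (simp add: J_eq_vanish_ideal vanish_ideal_iff_line_ideals)
    then show False
      using prime ideal_eq_UNIV_if_one unfolding is_prime_ideal_def by blast
  qed
  then show ?thesis using prime_ideal_power_notin[OF prime] by blast
qed

lemma symb_pow_if_ell_multiple:
  assumes "ell ^ n * F \<in> ideal_pow Jideal m"
  shows "F \<in> symb_pow Jideal m"
  unfolding symb_pow_def using ell_power_notin_ass assms by blast

lemma symb_pow_line_ideal:
  assumes "f \<in> symb_pow Jideal m" "t < 7"
  shows "\<exists>s. s \<notin> line_ideal (point t) \<and> s * f \<in> ideal_pow Jideal m"
  using assms line_ideal_ass[OF assms(2)] unfolding symb_pow_def by blast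

section \<open>Orders of vanishing\<close>

lemma monom_dvd_line_poly_of_ideal_pow:
  assumes a: "\<And>g. g \<in> Jideal \<Longrightarrow> val g a = 0" and f: "f \<in> ideal_pow Jideal m"
  shows "monom 1 m dvd line_poly a b f"
proof -
  let ?K = "\<lambda>m. {f. monom 1 m dvd line_poly a b f}"
  have "ideal_pow Jideal m \<subseteq> ?K m"
  proof (rule ideal_pow_induct[OF is_ideal_J])
    show "is_ideal (?K m)" for m
      unfolding is_ideal_def by auto
    show "x \<in> ?K 0" for x
      by (simp add: monom_0 one_pCons[symmetric])
    fix m x y assume "x \<in> ?K m" "y \<in> Jideal"
    moreover have "monom 1 1 dvd line_poly a b y"
      using a[OF \<open>y \<in> Jideal\<close>] poly_eq_0_iff_dvd[of "line_poly a b y" 0]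
      by (simp add: poly_line_poly_0 monom_Suc monom_0)
    ultimately have "monom 1 m * monom 1 1 dvd line_poly a b x * line_poly a b y"
      by (intro mult_dvd_mono) auto
    then show "x * y \<in> ?K (Suc m)" by (simp add: mult_monom)
  qed
  then show ?thesis using f by blast
qed

lemma monom_dvd_mult_cancel:
  fixes A B :: "complex poly"
  assumes "monom 1 m dvd A * B" "poly A 0 \<noteq> 0"
  shows "monom 1 m dvd B"
proof (cases "B = 0")
  case False
  have A: "A \<noteq> 0" and "order 0 A = 0"
    using assms(2) order_root by auto
  then have "order 0 (A * B) = order 0 B" using False by (simp add: order_mult)
  then show ?thesis using assms(1) A False by (simp add: monom_1_dvd_iff)
qed simp

definition hom_fun :: "cpoly3 \<Rightarrow> nat \<Rightarrow> bool" where
  "hom_fun f d \<longleftrightarrow> (\<forall>c v. c \<noteq> 0 \<longrightarrow> val f (pt_scale c v) = c ^ d * val f v)"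

lemma hom_funD: "hom_fun f d \<Longrightarrow> c \<noteq> 0 \<Longrightarrow> val f (pt_scale c v) = c ^ d * val f v"
  unfolding hom_fun_def by blast

text \<open>
  f vanishes to order at least m at the projective point p, tested on every line through
  every affine representative of p.
\<close>

definition mult_ge :: "cpoly3 \<Rightarrow> pt \<Rightarrow> nat \<Rightarrow> bool" where
  "mult_ge f p m \<longleftrightarrow> (\<forall>k b. k \<noteq> 0 \<longrightarrow> monom 1 m dvd line_poly (pt_scale k p) b f)"

lemma mult_ge_0: "mult_ge h p 0"
  unfolding mult_ge_def by (simp add: monom_0 one_pCons[symmetric])

lemma mult_geD: "mult_ge f p m \<Longrightarrow> monom 1 m dvd line_poly p b f"
  unfolding mult_ge_def by (metis pt_scale_1 one_neq_zero)

lemma line_poly_rescale: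
  assumes f: "hom_fun f d" and k: "k \<noteq> 0" and \<mu>: "\<mu> \<noteq> 0"
  shows "line_poly (pt_scale k p) b f
    = smult ((k / \<mu>) ^ d) (line_poly (pt_scale \<mu> p) (pt_scale (\<mu> / k) b) f)"
proof (rule poly_eq_if_agree_off_0)
  fix u :: complex
  have "pt_comb 1 (pt_scale k p) u b
      = pt_scale (k / \<mu>) (pt_comb 1 (pt_scale \<mu> p) u (pt_scale (\<mu> / k) b))"
    using k \<mu> by (intro pt_eqI) (simp_all add: field_simps)
  then show "poly (line_poly (pt_scale k p) b f) u
      = poly (smult ((k / \<mu>) ^ d) (line_poly (pt_scale \<mu> p) (pt_scale (\<mu> / k) b) f)) u"
    using hom_funD[OF f, of "k / \<mu>"] k \<mu> by (simp add: poly_line_poly)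
qed

lemma symb_pow_mult_ge:
  assumes f: "f \<in> symb_pow Jideal m" and hom: "hom_fun f d" and t: "t < 7"
  shows "mult_ge f (point t) m"
proof -
  obtain s where s: "s \<notin> line_ideal (point t)" "s * f \<in> ideal_pow Jideal m"
    using symb_pow_line_ideal[OF f t] by blast
  then have "line_poly (0, 0, 0) (point t) s \<noteq> 0"
    unfolding line_ideal_def by simp
  then obtain \<mu> where \<mu>: "\<mu> \<noteq> 0" "val s (pt_scale \<mu> (point t)) \<noteq> 0"
    using poly_zero_if_vanishes_off_0 by (metis poly_line_poly_origin)
  have J0: "val g (pt_scale \<mu> (point t)) = 0" if "g \<in> Jideal" for g
    using that t J_subset_vanish_ideal unfolding vanish_ideal_def by blast
  \<comment> \<open>s does not vanish at this representative, so f inherits the order m of s * f there;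
    homogeneity then moves the bound to every representative\<close>
  have base: "monom 1 m dvd line_poly (pt_scale \<mu> (point t)) b f" for b
  proof (rule monom_dvd_mult_cancel)
    show "monom 1 m dvd line_poly (pt_scale \<mu> (point t)) b s * line_poly (pt_scale \<mu> (point t)) b f"
      using monom_dvd_line_poly_of_ideal_pow[OF J0 s(2)] by simp
    show "poly (line_poly (pt_scale \<mu> (point t)) b s) 0 \<noteq> 0"
      using \<mu>(2) by (simp add: poly_line_poly_0)
  qed
  show ?thesis
    unfolding mult_ge_def
  proof (intro allI impI)
    fix k b assume "k \<noteq> (0::complex)"
    show "monom 1 m dvd line_poly (pt_scale k (point t)) b f"
      unfolding line_poly_rescale[OF hom \<open>k \<noteq> 0\<close> \<mu>(1)] by (rule dvd_smult[OF base])
  qed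
qed

lemma hom_fun_if_homog_of_deg:
  assumes h: "homog_of_deg f d"
  shows "hom_fun f d"
  unfolding hom_fun_def
proof (intro allI impI)
  fix c v
  obtain N where N: "deg_bounded f N" using deg_bounded_exists by blast
  have "coeff3 f i j k * (c * px v) ^ i * (c * py v) ^ j * (c * pz v) ^ k
      = c ^ d * (coeff3 f i j k * px v ^ i * py v ^ j * pz v ^ k)" for i j k
  proof (cases "coeff3 f i j k = 0")
    case False
    then have "i + j + k = d" using h unfolding homog_of_deg_def by blast
    then show ?thesis by (auto simp: power_mult_distrib power_add mult_ac)
  qed simp
  then show "val f (pt_scale c v) = c ^ d * val f v"
    unfolding val_expand[OF N] sum_distrib_left by (intro sum.cong) auto
qed

definition lin_form :: "complex \<Rightarrow> complex \<Rightarrow> complex \<Rightarrow> cpoly3" where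
  "lin_form a b c = const3 a * X + const3 b * Y + const3 c * Z"

definition lin_val :: "complex \<Rightarrow> complex \<Rightarrow> complex \<Rightarrow> pt \<Rightarrow> complex" where
  "lin_val a b c v = a * px v + b * py v + c * pz v"

lemma val_lin_form [simp]: "val (lin_form a b c) v = lin_val a b c v"
  unfolding lin_form_def lin_val_def by simp

lemma line_poly_lin_form [simp]:
  "line_poly p q (lin_form a b c) = [:lin_val a b c p, lin_val a b c q:]"
  unfolding lin_form_def lin_val_def by simp

lemma lin_val_pt_scale [simp]: "lin_val a b c (pt_scale k v) = k * lin_val a b c v"
  unfolding lin_val_def by (simp add: algebra_simps)

lemma lin_val_pt_comb [simp]:
  "lin_val a b c (pt_comb s v t w) = s * lin_val a b c v + t * lin_val a b c w"
  unfolding lin_val_def by (simp add: algebra_simps)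

lemma lin_val_nonzero_exists: "(a, b, c) \<noteq> (0, 0, 0) \<Longrightarrow> \<exists>w. lin_val a b c w \<noteq> 0"
proof -
  assume "(a, b, c) \<noteq> (0, 0, 0)"
  then have "lin_val a b c (1,0,0) \<noteq> 0 \<or> lin_val a b c (0,1,0) \<noteq> 0 \<or> lin_val a b c (0,0,1) \<noteq> 0"
    unfolding lin_val_def by auto
  then show ?thesis by blast
qed

definition pencil_poly :: "pt \<Rightarrow> pt \<Rightarrow> pt \<Rightarrow> cpoly3 \<Rightarrow> complex poly poly" where
  "pencil_poly a b w f = eval3 (\<lambda>c. [:[:c:]:]) [:[:px a:], [:px b, px w:]:]
     [:[:py a:], [:py b, py w:]:] [:[:pz a:], [:pz b, pz w:]:] f"

lemma map_poly_pencil_poly: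
  "map_poly (\<lambda>q. poly q t) (pencil_poly a b w f) = line_poly a (pt_comb 1 b t w) f"
proof -
  have hom: "is_ring_hom (\<lambda>c::complex. [:[:c:]:])"
    unfolding is_ring_hom_def by (simp add: one_pCons)
  have "map_poly (\<lambda>q. poly q t) (pencil_poly a b w f)
      = eval3 (map_poly (\<lambda>q. poly q t) \<circ> (\<lambda>c. [:[:c:]:]))
          (map_poly (\<lambda>q. poly q t) [:[:px a:], [:px b, px w:]:])
          (map_poly (\<lambda>q. poly q t) [:[:py a:], [:py b, py w:]:])
          (map_poly (\<lambda>q. poly q t) [:[:pz a:], [:pz b, pz w:]:]) f"
    unfolding pencil_poly_def
    by (rule ring_hom_eval3[OF hom is_ring_hom_map_poly[OF is_ring_hom_poly]])
  also have "map_poly (\<lambda>q. poly q t) \<circ> (\<lambda>c. [:[:c:]:]) = (\<lambda>c. [:c:])"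
    by (auto simp: o_def map_poly_pCons)
  finally show ?thesis
    unfolding line_poly_def by (simp add: map_poly_pCons algebra_simps)
qed

text \<open>The coefficients of \<open>line_poly a (b + t w) f\<close> are polynomials in t.\<close>

lemma monom_dvd_line_poly_limit:
  assumes "\<And>t. t \<noteq> 0 \<Longrightarrow> monom 1 n dvd line_poly a (pt_comb 1 b t w) f"
  shows "monom 1 n dvd line_poly a b f"
proof -
  have coeff: "coeff (line_poly a (pt_comb 1 b t w) f) k = poly (coeff (pencil_poly a b w f) k) t"
    for t k
    by (simp add: map_poly_pencil_poly[symmetric] coeff_map_poly)
  have "coeff (pencil_poly a b w f) k = 0" if "k < n" for k
    using assms that
    by (intro poly_zero_if_vanishes_off_0) (simp add: monom_1_dvd_iff' coeff[symmetric])
  then have "coeff (line_poly a b f) k = 0" if "k < n" for k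
    using that coeff[of 0 k] by simp
  then show ?thesis by (simp add: monom_1_dvd_iff')
qed

lemma monom_dvd_times_x_cancel:
  fixes P :: "complex poly"
  assumes "monom 1 m dvd [:0, \<beta>:] * P" "\<beta> \<noteq> 0"
  shows "monom 1 (m - 1) dvd P"
proof (cases m)
  case (Suc m')
  have "[:0, \<beta>:] * P = monom 1 1 * smult \<beta> P"
    by (simp add: monom_Suc monom_0)
  then have "monom 1 1 * monom 1 m' dvd monom 1 1 * smult \<beta> P"
    using assms(1) Suc by (simp add: mult_monom)
  then have "monom 1 m' dvd smult \<beta> P"
    by (subst (asm) dvd_mult_cancel_left) simp
  then show ?thesis using assms(2) Suc by (simp add: dvd_smult_cancel)
qed (simp add: monom_0 one_pCons[symmetric])

lemma mult_ge_lin_form_quotient: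
  assumes h: "mult_ge (lin_form a b c * h') p m" and nz: "(a, b, c) \<noteq> (0, 0, 0)"
  shows "mult_ge h' p (if lin_val a b c p = 0 then m - 1 else m)"
  unfolding mult_ge_def
proof (intro allI impI)
  fix k q assume k: "(k::complex) \<noteq> 0"
  have hk:
    "monom 1 m dvd [:k * lin_val a b c p, lin_val a b c q':] * line_poly (pt_scale k p) q' h'" for q'
  proof -
    have "monom 1 m dvd line_poly (pt_scale k p) q' (lin_form a b c * h')"
      using h k unfolding mult_ge_def by blast
    then show ?thesis by simp
  qed
  show "monom 1 (if lin_val a b c p = 0 then m - 1 else m) dvd line_poly (pt_scale k p) q h'"
  proof (cases "lin_val a b c p = 0")
    case False
    then show ?thesis using monom_dvd_mult_cancel[OF hk[of q]] k by simp
  next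
    case True
    have off_line: "monom 1 (m - 1) dvd line_poly (pt_scale k p) q' h'"
      if "lin_val a b c q' \<noteq> 0" for q'
    proof -
      have "monom 1 m dvd [:0, lin_val a b c q':] * line_poly (pt_scale k p) q' h'"
        using hk[of q'] True by simp
      then show ?thesis using that by (rule monom_dvd_times_x_cancel)
    qed
    obtain w where w: "lin_val a b c w \<noteq> 0"
      using lin_val_nonzero_exists[OF nz] by blast
    have "monom 1 (m - 1) dvd line_poly (pt_scale k p) q h'"
    proof (cases "lin_val a b c q = 0")
      case True
      show ?thesis
      proof (rule monom_dvd_line_poly_limit[where w = w])
        fix t :: complex assume "t \<noteq> 0"
        then have "lin_val a b c (pt_comb 1 q t w) \<noteq> 0" using True w by simp
        then show "monom 1 (m - 1) dvd line_poly (pt_scale k p) (pt_comb 1 q t w) h'"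
          by (rule off_line)
      qed
    qed (rule off_line)
    then show ?thesis using True by simp
  qed
qed
lemma hom_fun_lin_form_quotient:
  assumes h: "hom_fun (lin_form a b c * h') d" and nz: "(a, b, c) \<noteq> (0, 0, 0)" and d: "1 \<le> d"
  shows "hom_fun h' (d - 1)"
  unfolding hom_fun_def
proof (intro allI impI)
  fix k v assume k: "(k::complex) \<noteq> 0"
  have off_line: "val h' (pt_scale k v) = k ^ (d - 1) * val h' v" if v: "lin_val a b c v \<noteq> 0" for v
  proof -
    have "k * lin_val a b c v * val h' (pt_scale k v) = k ^ d * (lin_val a b c v * val h' v)"
      using hom_funD[OF h k, of v] by (simp only: val_simps val_lin_form lin_val_pt_scale)
    also have "k ^ d = k * k ^ (d - 1)" using d by (simp add: power_eq_if)
    finally show ?thesis using k v by (simp add: mult_ac)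
  qed
  show "val h' (pt_scale k v) = k ^ (d - 1) * val h' v"
  proof (cases "lin_val a b c v = 0")
    case True
    obtain w where w: "lin_val a b c w \<noteq> 0"
      using lin_val_nonzero_exists[OF nz] by blast
    let ?P = "line_poly (pt_scale k v) (pt_scale k w) h' - smult (k ^ (d - 1)) (line_poly v w h')"
    have "?P = 0"
    proof (rule poly_zero_if_vanishes_off_0)
      fix t :: complex assume t: "t \<noteq> 0"
      have "pt_comb 1 (pt_scale k v) t (pt_scale k w) = pt_scale k (pt_comb 1 v t w)"
        by (rule pt_eqI) (simp_all add: algebra_simps)
      moreover have "lin_val a b c (pt_comb 1 v t w) \<noteq> 0"
        using True w t by simp
      ultimately show "poly ?P t = 0"
        using off_line[of "pt_comb 1 v t w"] by (simp add: poly_line_poly)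
    qed
    then have "poly ?P 0 = 0" by simp
    then show ?thesis by (simp add: poly_line_poly_0)
  qed (rule off_line)
qed

section \<open>Forms vanishing to high order along a line\<close>

lemma line_poly_reverse:
  assumes hom: "hom_fun h d" and G: "line_poly p q h \<noteq> 0"
  shows "line_poly q p h \<noteq> 0 \<and> degree (line_poly p q h) + order 0 (line_poly q p h) = d"
proof -
  let ?G = "line_poly p q h" and ?H = "line_poly q p h"
  have "poly ?H u = u ^ d * poly ?G (inverse u)" if u: "u \<noteq> 0" for u
  proof -
    have "pt_comb 1 q u p = pt_scale u (pt_comb 1 p (inverse u) q)"
      using u by (intro pt_eqI) (simp_all add: field_simps)
    then show ?thesis using hom_funD[OF hom u] by (simp add: poly_line_poly)
  qed
  then have eq: "monom 1 (degree ?G) * ?H = monom 1 d * reflect_poly ?G"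
    by (intro poly_eq_if_agree_off_0) (simp add: poly_monom poly_reflect_poly_nz mult_ac)
  have refl: "poly (reflect_poly ?G) 0 \<noteq> 0" using G by (simp add: poly_0_coeff_0)
  then have H: "?H \<noteq> 0" using eq by auto
  have "order 0 (monom 1 (degree ?G) * ?H) = degree ?G + order 0 ?H"
    using H by (simp add: order_mult)
  moreover have "order 0 (monom 1 d * reflect_poly ?G) = d"
    using refl order_root[of "reflect_poly ?G" 0] by (auto simp: order_mult)
  ultimately show ?thesis using eq H by simp
qed

lemma line_poly_shift: "line_poly (pt_comb 1 p 1 q) q h = pcompose (line_poly p q h) [:1, 1:]"
proof (rule poly_eq_if_agree_off_0)
  fix u :: complex
  have "pt_comb 1 (pt_comb 1 p 1 q) u q = pt_comb 1 p (1 + u) q"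
    by (intro pt_eqI) (simp_all add: algebra_simps)
  then show
    "poly (line_poly (pt_comb 1 p 1 q) q h) u = poly (pcompose (line_poly p q h) [:1, 1:]) u"
    by (simp add: poly_line_poly poly_pcompose)
qed

lemma pcompose_power_left: "pcompose (p ^ n) r = pcompose p r ^ n"
  by (induction n) (simp_all add: pcompose_mult one_pCons)

lemma root_one_of_shift:
  fixes G :: "complex poly"
  assumes "monom 1 c dvd pcompose G [:1, 1:]"
  shows "[:-1, 1:] ^ c dvd G"
proof -
  obtain K where K: "pcompose G [:1, 1:] = monom 1 c * K"
    using assms by (auto elim: dvdE)
  have "G = pcompose (pcompose G [:1, 1:]) [:-1, 1:]"
    by (simp add: pcompose_assoc[symmetric] pcompose_pCons)
  also have "\<dots> = pcompose (monom 1 c) [:-1, 1:] * pcompose K [:-1, 1:]"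
    by (simp add: K pcompose_mult)
  also have "pcompose (monom 1 c) [:-1, 1:] = [:-1, 1:] ^ c"
    by (simp add: monom_altdef pcompose_power_left pcompose_pCons)
  finally show ?thesis by (metis dvd_triv_left)
qed

lemma orders_0_1_le_degree:
  fixes G :: "complex poly"
  assumes G: "G \<noteq> 0" and a: "monom 1 a dvd G" and c: "[:-1, 1:] ^ c dvd G"
  shows "a + c \<le> degree G"
proof -
  obtain G1 where G1: "G = [:0, 1:] ^ a * G1"
    using a by (auto simp: monom_altdef elim: dvdE)
  have "c \<le> order 1 G" using c G by (simp add: order_divides)
  also have "order 1 G = order 1 G1"
    using G1 G order_root[of "[:0, 1:] ^ a :: complex poly" 1] by (simp add: order_mult)
  finally have "[:-1, 1:] ^ c dvd G1" using G G1 by (simp add: order_divides)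
  then have "[:0, 1:] ^ a * [:-1, 1:] ^ c dvd G"
    unfolding G1 by (rule mult_dvd_mono[OF dvd_refl])
  then have "degree ([:0, 1:] ^ a * [:-1, 1:] ^ c :: complex poly) \<le> degree G"
    using G by (rule dvd_imp_degree_le)
  moreover have "degree ([:0, 1:] ^ a * [:-1, 1:] ^ c :: complex poly) = a + c"
    using degree_linear_power[of "0::complex" a] degree_linear_power[of "-1::complex" c]
    by (subst degree_mult_eq) auto
  ultimately show ?thesis by simp
qed

text \<open>
  Bezout for a line: the restriction to the line through p and q is a binary form of degree d
  with roots of orders a, b, c at p, q and p + q.
\<close>

lemma line_poly_zero_if_orders_exceed_degree:
  assumes hom: "hom_fun h d" and p: "mult_ge h p a" and q: "mult_ge h q b"
    and pq: "mult_ge h (pt_comb 1 p 1 q) c" and gt: "d < a + b + c"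
  shows "line_poly p q h = 0"
proof (rule ccontr)
  assume G: "line_poly p q h \<noteq> 0"
  have "b \<le> order 0 (line_poly q p h)"
    using mult_geD[OF q, of p] line_poly_reverse[OF hom G] by (simp add: monom_1_dvd_iff)
  moreover have "a + c \<le> degree (line_poly p q h)"
  proof (rule orders_0_1_le_degree[OF G mult_geD[OF p]])
    show "[:-1, 1:] ^ c dvd line_poly p q h"
      using mult_geD[OF pq, of q] by (intro root_one_of_shift) (simp add: line_poly_shift)
  qed
  ultimately show False using line_poly_reverse[OF hom G] gt by linarith
qed

lemma val_zero_on_line:
  assumes hom: "hom_fun h d" and G: "line_poly p q h = 0"
  shows "val h (pt_comb s p t q) = 0"
proof -
  have on_affine: "val h (pt_comb 1 p u q) = 0" for u
    using G by (metis poly_0 poly_line_poly)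
  show ?thesis
  proof (cases "s = 0")
    case False
    have "pt_comb s p t q = pt_scale s (pt_comb 1 p (t / s) q)"
      using False by (intro pt_eqI) (simp_all add: field_simps)
    then show ?thesis using hom_funD[OF hom False] on_affine by simp
  next
    case True
    let ?P = "line_poly (pt_scale t q) p h"
    have "?P = 0"
    proof (rule poly_zero_if_vanishes_off_0)
      fix s' :: complex assume s': "s' \<noteq> 0"
      have "pt_comb 1 (pt_scale t q) s' p = pt_scale s' (pt_comb 1 p (t / s') q)"
        using s' by (intro pt_eqI) (simp_all add: field_simps)
      then show "poly ?P s' = 0" using hom_funD[OF hom s'] on_affine by (simp add: poly_line_poly)
    qed
    moreover have "pt_comb 0 p t q = pt_scale t q" by (intro pt_eqI) simp_all
    ultimately show ?thesis using True poly_line_poly_0[of "pt_scale t q" p h] by simp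
  qed
qed

text \<open>In each case the form is monic in the variable of the outermost polynomial layer involved.\<close>

lemma lin_form_z_dvd:
  assumes "\<And>x y. val h (x, y, - (a * x + b * y)) = 0"
  shows "lin_form a b 1 dvd h"
proof -
  define r :: "complex poly poly" where "r = [:[:0, - a:], [:- b:]:]"
  have r: "eval2 x y r = - (a * x + b * y)" for x y
    unfolding r_def by (simp add: eval2_pCons)
  have "eval2 x y (poly h r) = 0" for x y
    using assms[of x y] by (simp add: ring_hom_poly[OF is_ring_hom_eval2] r val_eq_eval2)
  then have "[:- r, 1:] dvd h"
    by (simp add: poly_eq_0_iff_dvd[symmetric] eval2_zero_imp_zero)
  moreover have "[:- r, 1:] = lin_form a b 1"
    by (rule val_eqI)
      (simp add: val_pCons r ring_hom_uminus[OF is_ring_hom_eval2]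
        is_ring_homD[OF is_ring_hom_eval2] lin_val_def one_pCons[symmetric] algebra_simps)
  ultimately show ?thesis by simp
qed

lemma lin_form_y_dvd:
  assumes "\<And>x z. val h (x, - (a * x), z) = 0"
  shows "lin_form a 1 0 dvd h"
proof -
  define D :: "complex poly poly" where "D = [:- [:0, - a:], 1:]"
  have "D dvd coeff h k" for k
  proof -
    have "poly (poly (coeff h k) [:0, - a:]) x = 0" for x
    proof -
      have "map_poly (eval2 x (- a * x)) h = 0"
        using assms by (simp add: val_eq_eval2 poly_all_0_iff_0[symmetric])
      then have "eval2 x (- a * x) (coeff h k) = 0" by (rule coeff_map_eval2_eq_0)
      then show ?thesis
        by (simp add: ring_hom_poly[OF is_ring_hom_poly] eval2_def mult.commute)
    qed
    then have "poly (coeff h k) [:0, - a:] = 0"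
      by (simp add: poly_all_0_iff_0[symmetric])
    then show ?thesis unfolding D_def by (simp only: poly_eq_0_iff_dvd)
  qed
  then have "[:D:] dvd h" by (simp add: const_poly_dvd_iff)
  moreover have "[:D:] = lin_form a 1 0"
    by (rule val_eqI)
      (simp add: val_pCons D_def eval2_pCons lin_val_def one_pCons[symmetric] algebra_simps)
  ultimately show ?thesis by simp
qed

lemma lin_form_x_dvd:
  assumes "\<And>y z. val h (0, y, z) = 0"
  shows "lin_form 1 0 0 dvd h"
proof -
  define D :: "complex poly" where "D = [:0, 1:]"
  have "D dvd coeff (coeff h k) j" for k j
  proof -
    have "map_poly (eval2 0 y) h = 0" for y
      using assms by (simp add: val_eq_eval2 poly_all_0_iff_0[symmetric])
    then have "eval2 0 y (coeff h k) = 0" for y by (rule coeff_map_eval2_eq_0)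
    then have "map_poly (\<lambda>p. poly p 0) (coeff h k) = 0"
      unfolding eval2_def by (simp add: poly_all_0_iff_0[symmetric])
    then have "poly (coeff (coeff h k) j) 0 = 0" by (metis coeff_0 coeff_map_poly poly_0)
    then show ?thesis unfolding D_def by (simp add: poly_eq_0_iff_dvd)
  qed
  then have "[:[:D:]:] dvd h" by (simp add: const_poly_dvd_iff)
  moreover have "[:[:D:]:] = lin_form 1 0 0"
    unfolding D_def by (rule val_eqI) (simp add: val_pCons eval2_pCons lin_val_def)
  ultimately show ?thesis by simp
qed

lemma lin_form_dvd_if_rescaled_dvd:
  assumes k: "k \<noteq> 0" and dvd: "lin_form (a / k) (b / k) (c / k) dvd h"
  shows "lin_form a b c dvd h"
proof -
  have "lin_form (a / k) (b / k) (c / k) = lin_form a b c * const3 (1 / k)"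
    by (rule val_eqI) (simp add: lin_val_def divide_simps)
  then show ?thesis using dvd dvd_mult_left by metis
qed

lemma lin_form_dvd:
  assumes nz: "(a, b, c) \<noteq> (0, 0, 0)" and vanish: "\<And>v. lin_val a b c v = 0 \<Longrightarrow> val h v = 0"
  shows "lin_form a b c dvd h"
proof (cases "c = 0")
  case False
  have "lin_form (a / c) (b / c) 1 dvd h"
    by (rule lin_form_z_dvd, rule vanish) (use False in \<open>simp add: lin_val_def field_simps\<close>)
  then show ?thesis using lin_form_dvd_if_rescaled_dvd[of c a b c h] False by simp
next
  case c: True
  show ?thesis
  proof (cases "b = 0")
    case False
    have "lin_form (a / b) 1 0 dvd h"
      by (rule lin_form_y_dvd, rule vanish) (use False c in \<open>simp add: lin_val_def field_simps\<close>)
    then show ?thesis using lin_form_dvd_if_rescaled_dvd[of b a b c h] False c by simp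
  next
    case True
    then have "a \<noteq> 0" using nz c by simp
    have "lin_form 1 0 0 dvd h"
      by (rule lin_form_x_dvd, rule vanish) (use True c in \<open>simp add: lin_val_def\<close>)
    then show ?thesis using lin_form_dvd_if_rescaled_dvd[of a a b c h] True c \<open>a \<noteq> 0\<close> by simp
  qed
qed

section \<open>Peeling off lines\<close>

lemma hom_fun_0_val: "hom_fun h 0 \<Longrightarrow> val h v = val h (0, 0, 0)"
proof -
  assume hom: "hom_fun h 0"
  let ?P = "line_poly (0, 0, 0) v h - [:val h v:]"
  have "?P = 0"
    by (rule poly_zero_if_vanishes_off_0) (simp add: poly_line_poly_origin hom_funD[OF hom])
  then have "poly ?P 0 = 0" by simp
  then show ?thesis by (simp add: poly_line_poly_0)
qed

definition lower_on :: "complex \<Rightarrow> complex \<Rightarrow> complex \<Rightarrow> (nat \<Rightarrow> nat) \<Rightarrow> nat \<Rightarrow> nat" where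
  "lower_on \<alpha> \<beta> \<gamma> m t = (if lin_val \<alpha> \<beta> \<gamma> (point t) = 0 then m t - 1 else m t)"

lemma peel_line:
  assumes h: "h \<noteq> 0" and hom: "hom_fun h d" and M: "\<forall>t<7. mult_ge h (point t) (m t)"
    and p: "mult_ge h p a" and q: "mult_ge h q b" and pq: "mult_ge h (pt_comb 1 p 1 q) c"
    and gt: "d < a + b + c" and nz: "(\<alpha>, \<beta>, \<gamma>) \<noteq> (0, 0, 0)"
    and span: "\<And>x y z. lin_val \<alpha> \<beta> \<gamma> (x, y, z) = 0 \<Longrightarrow> \<exists>s t. (x, y, z) = pt_comb s p t q"
  obtains h' where "h' \<noteq> 0" "1 \<le> d" "hom_fun h' (d - 1)"
    "\<forall>t<7. mult_ge h' (point t) (lower_on \<alpha> \<beta> \<gamma> m t)"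
proof -
  have "val h v = 0" if v0: "lin_val \<alpha> \<beta> \<gamma> v = 0" for v
  proof -
    obtain x y z where v: "v = (x, y, z)" by (cases v)
    obtain s t where "v = pt_comb s p t q"
      using span[of x y z] v0 v by blast
    then show ?thesis
      using val_zero_on_line[OF hom line_poly_zero_if_orders_exceed_degree[OF hom p q pq gt]]
      by simp
  qed
  then obtain h' where h': "h = lin_form \<alpha> \<beta> \<gamma> * h'"
    using lin_form_dvd[OF nz] by (metis dvdE)
  have d: "1 \<le> d"
  proof (rule ccontr)
    assume "\<not> 1 \<le> d"
    then have "d = 0" by simp
    then have "hom_fun h 0" using hom by simp
    then have "val h v = 0" for v
      using hom_fun_0_val[of h v] h' by (simp add: lin_val_def)
    then show False using h val_zero_imp_zero by blast
  qed
  show thesis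
  proof
    show "h' \<noteq> 0" using h h' by auto
    show "1 \<le> d" by (rule d)
    show "hom_fun h' (d - 1)" using hom_fun_lin_form_quotient[OF _ nz d] hom h' by blast
    show "\<forall>t<7. mult_ge h' (point t) (lower_on \<alpha> \<beta> \<gamma> m t)"
      using mult_ge_lin_form_quotient[OF _ nz] M h' unfolding lower_on_def by blast
  qed
qed

text \<open>
  The weights 3 and 6 make every one of the nine lines carry total weight 12: a line through
  three of the points contains two of weight 3 and one of weight 6, a line through two of
  them contains two of weight 6.
\<close>

definition weighted_mult :: "(nat \<Rightarrow> nat) \<Rightarrow> nat" where
  "weighted_mult m = 3 * (m 0 + m 1 + m 2 + m 3) + 6 * (m 4 + m 5 + m 6)"

lemma weighted_mult_le_if_line_sums_le:
  assumes "m 1 + m 2 + m 4 \<le> d" "m 0 + m 2 + m 5 \<le> d" "m 0 + m 1 + m 6 \<le> d"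
    "m 2 + m 6 + m 3 \<le> d" "m 0 + m 4 + m 3 \<le> d" "m 1 + m 5 + m 3 \<le> d"
    "m 4 + m 5 \<le> d" "m 4 + m 6 \<le> d" "m 5 + m 6 \<le> d"
  shows "weighted_mult m \<le> 12 * d"
proof -
  have "weighted_mult m = (m 1 + m 2 + m 4) + (m 0 + m 2 + m 5) + (m 0 + m 1 + m 6)
      + (m 2 + m 6 + m 3) + (m 0 + m 4 + m 3) + (m 1 + m 5 + m 3)
      + 2 * (m 4 + m 5) + 2 * (m 4 + m 6) + 2 * (m 5 + m 6)"
    unfolding weighted_mult_def by simp
  then show ?thesis using assms by simp
qed

lemma weighted_mult_le_by_peeling:
  assumes IH: "\<And>h' m'. 1 \<le> d \<Longrightarrow> h' \<noteq> 0 \<Longrightarrow> hom_fun h' (d - 1)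
      \<Longrightarrow> \<forall>t<7. mult_ge h' (point t) (m' t) \<Longrightarrow> weighted_mult m' \<le> 12 * (d - 1)"
    and h: "h \<noteq> 0" "hom_fun h d" "\<forall>t<7. mult_ge h (point t) (m t)"
    and line: "mult_ge h p a" "mult_ge h q b" "mult_ge h (pt_comb 1 p 1 q) c" "d < a + b + c"
      "(\<alpha>, \<beta>, \<gamma>) \<noteq> (0, 0, 0)"
      "\<And>x y z. lin_val \<alpha> \<beta> \<gamma> (x, y, z) = 0 \<Longrightarrow> \<exists>s t. (x, y, z) = pt_comb s p t q"
    and drop: "weighted_mult m \<le> weighted_mult (lower_on \<alpha> \<beta> \<gamma> m) + 12"
  shows "weighted_mult m \<le> 12 * d"
proof -
  obtain h' where "h' \<noteq> 0" "1 \<le> d" "hom_fun h' (d - 1)"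
    "\<forall>t<7. mult_ge h' (point t) (lower_on \<alpha> \<beta> \<gamma> m t)"
    using peel_line[OF h line] .
  with IH[of h' "lower_on \<alpha> \<beta> \<gamma> m"] drop show ?thesis by simp
qed

lemma weighted_mult_le:
  "h \<noteq> 0 \<Longrightarrow> hom_fun h d \<Longrightarrow> \<forall>t<7. mult_ge h (point t) (m t) \<Longrightarrow> weighted_mult m \<le> 12 * d"
proof (induction d arbitrary: h m rule: less_induct)
  case (less d)
  have M: "mult_ge h (point t) (m t)" if "t < 7" for t
    using less.prems(3) that by blast
  note peel = weighted_mult_le_by_peeling[OF less.IH less.prems]
  note simps = pt_comb_def lin_val_def weighted_mult_def lower_on_def
  have "weighted_mult m \<le> 12 * d" if "d < m 1 + m 2 + m 4"
    by (rule peel[where p = "point 1" and q = "point 2" and a = "m 1" and b = "m 2" and c = "m 4"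
          and \<alpha> = "1" and \<beta> = "0" and \<gamma> = "0"])
      (use that M[of 1] M[of 2] M[of 4] in \<open>auto simp: simps\<close>)
  moreover have "weighted_mult m \<le> 12 * d" if "d < m 0 + m 2 + m 5"
    by (rule peel[where p = "point 0" and q = "point 2" and a = "m 0" and b = "m 2" and c = "m 5"
          and \<alpha> = "0" and \<beta> = "1" and \<gamma> = "0"])
      (use that M[of 0] M[of 2] M[of 5] in \<open>auto simp: simps\<close>)
  moreover have "weighted_mult m \<le> 12 * d" if "d < m 0 + m 1 + m 6"
    by (rule peel[where p = "point 0" and q = "point 1" and a = "m 0" and b = "m 1" and c = "m 6"
          and \<alpha> = "0" and \<beta> = "0" and \<gamma> = "1"])
      (use that M[of 0] M[of 1] M[of 6] in \<open>auto simp: simps\<close>)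
  moreover have "weighted_mult m \<le> 12 * d" if "d < m 2 + m 6 + m 3"
    by (rule peel[where p = "point 2" and q = "point 6" and a = "m 2" and b = "m 6" and c = "m 3"
          and \<alpha> = "1" and \<beta> = "-1" and \<gamma> = "0"])
      (use that M[of 2] M[of 6] M[of 3] in \<open>auto simp: simps\<close>)
  moreover have "weighted_mult m \<le> 12 * d" if "d < m 0 + m 4 + m 3"
    by (rule peel[where p = "point 0" and q = "point 4" and a = "m 0" and b = "m 4" and c = "m 3"
          and \<alpha> = "0" and \<beta> = "1" and \<gamma> = "-1"])
      (use that M[of 0] M[of 4] M[of 3] in \<open>auto simp: simps\<close>)
  moreover have "weighted_mult m \<le> 12 * d" if "d < m 1 + m 5 + m 3"
    by (rule peel[where p = "point 1" and q = "point 5" and a = "m 1" and b = "m 5" and c = "m 3"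
          and \<alpha> = "1" and \<beta> = "0" and \<gamma> = "-1"])
      (use that M[of 1] M[of 5] M[of 3] in \<open>auto simp: simps\<close>)
  moreover have "weighted_mult m \<le> 12 * d" if "d < m 4 + m 5"
    by (rule peel[where p = "point 4" and q = "point 5" and a = "m 4" and b = "m 5" and c = "0"
          and \<alpha> = "1" and \<beta> = "1" and \<gamma> = "-1"])
      (use that M[of 4] M[of 5] mult_ge_0 in \<open>auto simp: simps\<close>)
  moreover have "weighted_mult m \<le> 12 * d" if "d < m 4 + m 6"
    by (rule peel[where p = "point 4" and q = "point 6" and a = "m 4" and b = "m 6" and c = "0"
          and \<alpha> = "1" and \<beta> = "-1" and \<gamma> = "1"])
      (use that M[of 4] M[of 6] mult_ge_0 in \<open>auto simp: simps algebra_simps\<close>)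
  moreover have "weighted_mult m \<le> 12 * d" if "d < m 5 + m 6"
    by (rule peel[where p = "point 5" and q = "point 6" and a = "m 5" and b = "m 6" and c = "0"
          and \<alpha> = "-1" and \<beta> = "1" and \<gamma> = "1"])
      (use that M[of 5] M[of 6] mult_ge_0 in \<open>auto simp: simps algebra_simps\<close>)
  ultimately show ?case
    using weighted_mult_le_if_line_sums_le[of m d] by linarith
qed

lemma no_quintic_with_double_points:
  assumes h: "h \<noteq> 0" and hom: "hom_fun h 5" and M: "\<forall>t<7. mult_ge h (point t) 2"
  shows False
proof -
  note simps = pt_comb_def lin_val_def lower_on_def mult_ge_0
  define m1 where "m1 = lower_on 1 0 0 (\<lambda>_. 2)"
  obtain h1 where h1: "h1 \<noteq> 0" "hom_fun h1 4" and M1: "\<forall>t<7. mult_ge h1 (point t) (m1 t)"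
    by (rule peel_line[OF h hom M, where p = "point 1" and q = "point 2" and a = 2 and b = 2
          and c = 2 and \<alpha> = 1 and \<beta> = 0 and \<gamma> = 0]; (rule that)?)
      (use M[rule_format, of 1] M[rule_format, of 2] M[rule_format, of 4] in
        \<open>auto simp: simps m1_def\<close>)
  define m2 where "m2 = lower_on 0 1 0 m1"
  obtain h2 where h2: "h2 \<noteq> 0" "hom_fun h2 3" and M2: "\<forall>t<7. mult_ge h2 (point t) (m2 t)"
    by (rule peel_line[OF h1 M1, where p = "point 0" and q = "point 2" and a = 2 and b = 1
          and c = 2 and \<alpha> = 0 and \<beta> = 1 and \<gamma> = 0]; (rule that)?)
      (use M1[rule_format, of 0] M1[rule_format, of 2] M1[rule_format, of 5] in
        \<open>auto simp: simps m1_def m2_def\<close>)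
  define m3 where "m3 = lower_on 0 0 1 m2"
  obtain h3 where h3: "h3 \<noteq> 0" "hom_fun h3 2" and M3: "\<forall>t<7. mult_ge h3 (point t) (m3 t)"
    by (rule peel_line[OF h2 M2, where p = "point 0" and q = "point 1" and a = 1 and b = 1
          and c = 2 and \<alpha> = 0 and \<beta> = 0 and \<gamma> = 1]; (rule that)?)
      (use M2[rule_format, of 0] M2[rule_format, of 1] M2[rule_format, of 6] in
        \<open>auto simp: simps m1_def m2_def m3_def\<close>)
  define m4 where "m4 = lower_on 1 (-1) 0 m3"
  obtain h4 where h4: "h4 \<noteq> 0" "hom_fun h4 1" and M4: "\<forall>t<7. mult_ge h4 (point t) (m4 t)"
    by (rule peel_line[OF h3 M3, where p = "point 2" and q = "point 6" and a = 0 and b = 1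
          and c = 2 and \<alpha> = 1 and \<beta> = "-1" and \<gamma> = 0]; (rule that)?)
      (use M3[rule_format, of 2] M3[rule_format, of 6] M3[rule_format, of 3] in
        \<open>auto simp: simps m1_def m2_def m3_def m4_def\<close>)
  define m5 where "m5 = lower_on 0 1 (-1) m4"
  obtain h5 where h5: "h5 \<noteq> 0" "hom_fun h5 0" and M5: "\<forall>t<7. mult_ge h5 (point t) (m5 t)"
    by (rule peel_line[OF h4 M4, where p = "point 0" and q = "point 4" and a = 0 and b = 1
          and c = 1 and \<alpha> = 0 and \<beta> = 1 and \<gamma> = "-1"]; (rule that)?)
      (use M4[rule_format, of 0] M4[rule_format, of 4] M4[rule_format, of 3] in
        \<open>auto simp: simps m1_def m2_def m3_def m4_def m5_def\<close>)
  obtain h6 where "1 \<le> (0::nat)"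
    by (rule peel_line[OF h5 M5, where p = "point 1" and q = "point 5" and a = 0 and b = 1
          and c = 0 and \<alpha> = 1 and \<beta> = 0 and \<gamma> = "-1"]; (rule that)?)
      (use M5[rule_format, of 1] M5[rule_format, of 5] M5[rule_format, of 3] in
        \<open>auto simp: simps m1_def m2_def m3_def m4_def m5_def\<close>)
  then show False by simp
qed

lemma homog_of_deg_add: "homog_of_deg f d \<Longrightarrow> homog_of_deg g d \<Longrightarrow> homog_of_deg (f + g) d"
  unfolding homog_of_deg_def coeff3_add by (metis add.right_neutral add_0)

lemma homog_of_deg_diff: "homog_of_deg f d \<Longrightarrow> homog_of_deg g d \<Longrightarrow> homog_of_deg (f - g) d"
  unfolding homog_of_deg_def coeff3_diff by (metis diff_self diff_zero)

lemma homog_of_deg_mult: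
  assumes f: "homog_of_deg f a" and g: "homog_of_deg g b"
  shows "homog_of_deg (f * g) (a + b)"
  unfolding homog_of_deg_def
proof (intro allI impI)
  fix i j k assume "coeff3 (f * g) i j k \<noteq> 0"
  then obtain k1 where k1: "k1 \<le> k"
      "(\<Sum>j1\<le>j. \<Sum>i1\<le>i. coeff3 f i1 j1 k1 * coeff3 g (i - i1) (j - j1) (k - k1)) \<noteq> 0"
    unfolding coeff3_mult by (meson atMost_iff sum.not_neutral_contains_not_neutral)
  then obtain j1 where j1: "j1 \<le> j"
      "(\<Sum>i1\<le>i. coeff3 f i1 j1 k1 * coeff3 g (i - i1) (j - j1) (k - k1)) \<noteq> 0"
    by (meson atMost_iff sum.not_neutral_contains_not_neutral)
  then obtain i1 where i1: "i1 \<le> i" "coeff3 f i1 j1 k1 * coeff3 g (i - i1) (j - j1) (k - k1) \<noteq> 0"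
    by (meson atMost_iff sum.not_neutral_contains_not_neutral)
  then have nz: "coeff3 f i1 j1 k1 \<noteq> 0" "coeff3 g (i - i1) (j - j1) (k - k1) \<noteq> 0"
    by auto
  have "i1 + j1 + k1 = a" using f nz(1) unfolding homog_of_deg_def by blast
  moreover have "(i - i1) + (j - j1) + (k - k1) = b"
    using g nz(2) unfolding homog_of_deg_def by blast
  ultimately show "i + j + k = a + b" using i1(1) j1(1) k1(1) by linarith
qed

lemma homog_of_deg_power: "homog_of_deg f a \<Longrightarrow> homog_of_deg (f ^ n) (n * a)"
proof (induction n)
  case 0
  then show ?case
    unfolding homog_of_deg_def coeff3_def by (auto simp: coeff_pCons one_pCons split: nat.splits)
next
  case (Suc n)
  then show ?case using homog_of_deg_mult[of f a "f ^ n" "n * a"] by (simp add: add.commute)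
qed

lemma homog_of_deg_XYZ: "homog_of_deg X 1" "homog_of_deg Y 1" "homog_of_deg Z 1"
  unfolding homog_of_deg_def coeff3_def X_def Y_def Z_def
  by (auto simp: coeff_pCons split: nat.splits)

lemmas homog_of_deg_intros =
  homog_of_deg_mult homog_of_deg_add homog_of_deg_diff homog_of_deg_power homog_of_deg_XYZ

section \<open>Forms in the symbolic powers\<close>

lemma gens_power_in_J_pow: "a + b + c = m \<Longrightarrow> g1 ^ a * g2 ^ b * g3 ^ c \<in> ideal_pow Jideal m"
  using ideal_pow_mult[OF is_ideal_J ideal_pow_mult[OF is_ideal_J]] power_in_ideal_pow gens_in_J
  by blast

lemmas J_pow_add = ideal_add[OF is_ideal_ideal_pow[OF is_ideal_J]]
lemmas J_pow_mult_gens =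
  ideal_mult_left[OF is_ideal_ideal_pow[OF is_ideal_J] gens_power_in_J_pow]

text \<open>
  F2 is the product of the six lines through three of the points; X + Y - Z, X - Y + Z and
  Y + Z - X are the three lines through two of them.
\<close>

definition F2 :: cpoly3 where "F2 = X * Y * Z * (X - Y) * (Y - Z) * (Z - X)"
definition F3 :: cpoly3 where "F3 = F2 * (X + Y - Z) * (X - Y + Z)"
definition F4 :: cpoly3 where "F4 = F2 * Z * (X - Y) * (X + Y - Z) ^ 2"
definition F6 :: cpoly3 where "F6 = F2 ^ 2 * (X + Y - Z) * (X - Y + Z) * (Y + Z - X)"

lemma F2_in_symb_pow: "F2 \<in> symb_pow Jideal 2"
proof (rule symb_pow_if_ell_multiple)
  have "ell ^ 1 * F2 =
      Z * (g1 ^ 0 * g2 ^ 0 * g3 ^ 2)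
    + (2 * Y - 2 * Z) * (g1 ^ 0 * g2 ^ 1 * g3 ^ 1)
    + (- Y) * (g1 ^ 0 * g2 ^ 2 * g3 ^ 0)
    + Z * (g1 ^ 1 * g2 ^ 0 * g3 ^ 1)
    + (- Y) * (g1 ^ 1 * g2 ^ 1 * g3 ^ 0)"
    unfolding ell_def F2_def g1_def g2_def g3_def by algebra
  also have "\<dots> \<in> ideal_pow Jideal 2"
    by (intro J_pow_add; rule J_pow_mult_gens; simp)
  finally show "ell ^ 1 * F2 \<in> ideal_pow Jideal 2" .
qed

lemma F3_in_symb_pow: "F3 \<in> symb_pow Jideal 3"
proof (rule symb_pow_if_ell_multiple)
  have "ell ^ 2 * F3 =
      (3 * Z) * (g1 ^ 0 * g2 ^ 0 * g3 ^ 3)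
    + (X + 6 * Y - 7 * Z) * (g1 ^ 0 * g2 ^ 1 * g3 ^ 2)
    + (X - 7 * Y + 6 * Z) * (g1 ^ 0 * g2 ^ 2 * g3 ^ 1)
    + (3 * Y) * (g1 ^ 0 * g2 ^ 3 * g3 ^ 0)
    + (- Y + 2 * Z) * (g1 ^ 1 * g2 ^ 0 * g3 ^ 2)
    + (Y + Z) * (g1 ^ 1 * g2 ^ 1 * g3 ^ 1)
    + (2 * Y - Z) * (g1 ^ 1 * g2 ^ 2 * g3 ^ 0)
    + (- Y - Z) * (g1 ^ 2 * g2 ^ 0 * g3 ^ 1)
    + (- Y - Z) * (g1 ^ 2 * g2 ^ 1 * g3 ^ 0)"
    unfolding ell_def F3_def F2_def g1_def g2_def g3_def by algebra
  also have "\<dots> \<in> ideal_pow Jideal 3"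
    by (intro J_pow_add; rule J_pow_mult_gens; simp)
  finally show "ell ^ 2 * F3 \<in> ideal_pow Jideal 3" .
qed

lemma F4_in_symb_pow: "F4 \<in> symb_pow Jideal 4"
proof (rule symb_pow_if_ell_multiple)
  have "ell ^ 3 * F4 =
      (- 10 * Z) * (g1 ^ 0 * g2 ^ 1 * g3 ^ 3)
    + (- X - 15 * Y + 12 * Z) * (g1 ^ 0 * g2 ^ 2 * g3 ^ 2)
    + (- X + 10 * Y - 6 * Z) * (g1 ^ 0 * g2 ^ 3 * g3 ^ 1)
    + (- 3 * Y) * (g1 ^ 0 * g2 ^ 4 * g3 ^ 0)
    + (5 * Z) * (g1 ^ 1 * g2 ^ 0 * g3 ^ 3)
    + (15 * Y - 3 * Z) * (g1 ^ 1 * g2 ^ 1 * g3 ^ 2)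
    + (- 3 * Z) * (g1 ^ 1 * g2 ^ 2 * g3 ^ 1)
    + (- 3 * Y + Z) * (g1 ^ 1 * g2 ^ 3 * g3 ^ 0)
    + (- Y + 2 * Z) * (g1 ^ 2 * g2 ^ 0 * g3 ^ 2)
    + (- 10 * Y) * (g1 ^ 2 * g2 ^ 1 * g3 ^ 1)
    + (3 * Y + 2 * Z) * (g1 ^ 2 * g2 ^ 2 * g3 ^ 0)
    + (- Y - 3 * Z) * (g1 ^ 3 * g2 ^ 0 * g3 ^ 1)
    + (3 * Y + Z) * (g1 ^ 3 * g2 ^ 1 * g3 ^ 0)"
    unfolding ell_def F4_def F2_def g1_def g2_def g3_def by algebra
  also have "\<dots> \<in> ideal_pow Jideal 4"
    by (intro J_pow_add; rule J_pow_mult_gens; simp)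
  finally show "ell ^ 3 * F4 \<in> ideal_pow Jideal 4" .
qed

lemma F6_in_symb_pow: "F6 \<in> symb_pow Jideal 6"
proof (rule symb_pow_if_ell_multiple)
  have "ell ^ 4 * F6 =
      (- 10 * Z) * (g1 ^ 0 * g2 ^ 1 * g3 ^ 5)
    + (- X - 15 * Y + 9 * Z) * (g1 ^ 0 * g2 ^ 2 * g3 ^ 4)
    + (- 2 * X + 4 * Y + 4 * Z) * (g1 ^ 0 * g2 ^ 3 * g3 ^ 3)
    + (- X + 9 * Y - 15 * Z) * (g1 ^ 0 * g2 ^ 4 * g3 ^ 2)
    + (- 10 * Y) * (g1 ^ 0 * g2 ^ 5 * g3 ^ 1)
    + (5 * Z) * (g1 ^ 1 * g2 ^ 0 * g3 ^ 5)
    + (15 * Y - 4 * Z) * (g1 ^ 1 * g2 ^ 1 * g3 ^ 4)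
    + (- 8 * Z) * (g1 ^ 1 * g2 ^ 2 * g3 ^ 3)
    + (- 8 * Y) * (g1 ^ 1 * g2 ^ 3 * g3 ^ 2)
    + (- 4 * Y + 15 * Z) * (g1 ^ 1 * g2 ^ 4 * g3 ^ 1)
    + (5 * Y) * (g1 ^ 1 * g2 ^ 5 * g3 ^ 0)
    + (- Y + 5 * Z) * (g1 ^ 2 * g2 ^ 0 * g3 ^ 4)
    + (- 4 * Y) * (g1 ^ 2 * g2 ^ 1 * g3 ^ 3)
    + (8 * Y + 8 * Z) * (g1 ^ 2 * g2 ^ 2 * g3 ^ 2)
    + (- 4 * Z) * (g1 ^ 2 * g2 ^ 3 * g3 ^ 1)
    + (5 * Y - Z) * (g1 ^ 2 * g2 ^ 4 * g3 ^ 0)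
    + (- 2 * Y - 5 * Z) * (g1 ^ 3 * g2 ^ 0 * g3 ^ 3)
    + (- 9 * Y + 4 * Z) * (g1 ^ 3 * g2 ^ 1 * g3 ^ 2)
    + (4 * Y - 9 * Z) * (g1 ^ 3 * g2 ^ 2 * g3 ^ 1)
    + (- 5 * Y - 2 * Z) * (g1 ^ 3 * g2 ^ 3 * g3 ^ 0)
    + (- Y - 5 * Z) * (g1 ^ 4 * g2 ^ 0 * g3 ^ 2)
    + (10 * Y + 10 * Z) * (g1 ^ 4 * g2 ^ 1 * g3 ^ 1)
    + (- 5 * Y - Z) * (g1 ^ 4 * g2 ^ 2 * g3 ^ 0)"
    unfolding ell_def F6_def F2_def g1_def g2_def g3_def by algebra
  also have "\<dots> \<in> ideal_pow Jideal 6"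
    by (intro J_pow_add; rule J_pow_mult_gens; simp)
  finally show "ell ^ 4 * F6 \<in> ideal_pow Jideal 6" .
qed

lemma g1_in_symb_pow: "g1 \<in> symb_pow Jideal 1"
  using symb_pow_if_ell_multiple[of 0 g1 1] gens_in_J(1) ideal_pow_one[OF is_ideal_J] by simp

lemma homog_of_deg_witnesses:
  "homog_of_deg g1 3" "homog_of_deg F2 6" "homog_of_deg F3 8" "homog_of_deg F4 10"
  "homog_of_deg F6 15"
proof -
  have "homog_of_deg g1 (1 + 1 + 1)" "homog_of_deg F2 (1 + 1 + 1 + 1 + 1 + 1)"
    unfolding g1_def F2_def by (intro homog_of_deg_intros)+
  then show g1: "homog_of_deg g1 3" and F2: "homog_of_deg F2 6"
    by (simp_all add: eval_nat_numeral)
  have "homog_of_deg F3 (6 + 1 + 1)" "homog_of_deg F4 (6 + 1 + 1 + 2 * 1)"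
    "homog_of_deg F6 (2 * 6 + 1 + 1 + 1)"
    unfolding F3_def F4_def F6_def by (intro homog_of_deg_intros F2)+
  then show "homog_of_deg F3 8" "homog_of_deg F4 10" "homog_of_deg F6 15"
    by simp_all
qed

lemma witnesses_nonzero: "g1 \<noteq> 0" "F2 \<noteq> 0" "F3 \<noteq> 0" "F4 \<noteq> 0" "F6 \<noteq> 0"
  by (auto dest!: arg_cong[where f = "\<lambda>f. val f (1, 2, 4)"]
      simp: g1_def F2_def F3_def F4_def F6_def)

section \<open>The initial degrees\<close>

definition symb_form :: "nat \<Rightarrow> nat \<Rightarrow> bool" where
  "symb_form m d \<longleftrightarrow> (\<exists>F\<in>symb_pow Jideal m. F \<noteq> 0 \<and> homog_of_deg F d)"

lemma symb_form_mult: "symb_form a d \<Longrightarrow> symb_form b e \<Longrightarrow> symb_form (a + b) (d + e)"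
  unfolding symb_form_def
  using symb_pow_mult[OF is_ideal_J] homog_of_deg_mult by (metis mult_eq_0_iff)

lemma symb_form_base: "symb_form 1 3" "symb_form 2 6" "symb_form 3 8" "symb_form 4 10"
  "symb_form 6 15"
  unfolding symb_form_def
  using g1_in_symb_pow F2_in_symb_pow F3_in_symb_pow F4_in_symb_pow F6_in_symb_pow
    witnesses_nonzero homog_of_deg_witnesses by blast+

lemma symb_form_even: "2 \<le> k \<Longrightarrow> symb_form (2 * k) (5 * k)"
proof (induction k rule: less_induct)
  case (less k)
  consider "k = 2" | "k = 3" | "4 \<le> k" using less.prems by linarith
  then show ?case
  proof cases
    case 3
    then have "symb_form (4 + 2 * (k - 2)) (10 + 5 * (k - 2))"
      using less.IH[of "k - 2"] by (intro symb_form_mult symb_form_base) auto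
    moreover have "4 + 2 * (k - 2) = 2 * k" "10 + 5 * (k - 2) = 5 * k" using 3 by simp_all
    ultimately show ?thesis by simp
  qed (use symb_form_base in simp_all)
qed

lemma symb_form_odd: "symb_form (2 * k + 1) (5 * k + 3)"
proof -
  consider "k = 0" | "k = 1" | "2 \<le> k" by linarith
  then show ?thesis
  proof cases
    case 3
    then show ?thesis using symb_form_mult[OF symb_form_even symb_form_base(1)] by simp
  qed (use symb_form_base in simp_all)
qed

lemma alpha_eqI:
  assumes "symb_form m d"
    and "\<And>f e. f \<in> symb_pow Jideal m \<Longrightarrow> f \<noteq> 0 \<Longrightarrow> homog_of_deg f e \<Longrightarrow> d \<le> e"
  shows "alpha (symb_pow Jideal m) = d"
  unfolding alpha_def using assms unfolding symb_form_def by (intro Least_equality) blast+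

lemma symb_pow_degree_bound:
  assumes f: "f \<in> symb_pow Jideal m" "f \<noteq> 0" "homog_of_deg f d"
  shows "5 * m \<le> 2 * d"
proof -
  have hom: "hom_fun f d" using hom_fun_if_homog_of_deg[OF f(3)] .
  have "\<forall>t<7. mult_ge f (point t) m"
    using symb_pow_mult_ge[OF f(1) hom] by blast
  from weighted_mult_le[OF f(2) hom this] show ?thesis
    by (simp add: weighted_mult_def)
qed

lemma symb_pow_2_degree_bound:
  assumes f: "f \<in> symb_pow Jideal 2" "f \<noteq> 0" "homog_of_deg f d"
  shows "6 \<le> d"
proof -
  have "d \<noteq> 5"
  proof
    assume "d = 5"
    then have hom: "hom_fun f 5" using hom_fun_if_homog_of_deg[OF f(3)] by simp
    show False
      using no_quintic_with_double_points[OF f(2) hom] symb_pow_mult_ge[OF f(1) hom] by blast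
  qed
  then show ?thesis using symb_pow_degree_bound[OF f] by simp
qed

lemma alpha_even: "2 \<le> k \<Longrightarrow> alpha (symb_pow Jideal (2 * k)) = 5 * k"
  using symb_pow_degree_bound[of _ "2 * k"] by (intro alpha_eqI symb_form_even) fastforce+

lemma alpha_odd: "alpha (symb_pow Jideal (2 * k + 1)) = 5 * k + 3"
  using symb_pow_degree_bound[of _ "2 * k + 1"] by (intro alpha_eqI symb_form_odd) fastforce

lemma alpha_2: "alpha (symb_pow Jideal 2) = 6"
  using symb_pow_2_degree_bound by (intro alpha_eqI symb_form_base)

lemma alpha_quotient_close:
  assumes m: "1 \<le> m"
  shows "\<bar>real (alpha (symb_pow Jideal m)) / real m - 5 / 2\<bar> \<le> 1 / real m"
proof (cases "even m")
  case True
  then obtain k where k: "m = 2 * k" by (auto elim: evenE)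
  show ?thesis
  proof (cases "2 \<le> k")
    case True
    then show ?thesis using k alpha_even by simp
  next
    case False
    then have "k = 1" using k m by simp
    then show ?thesis using k alpha_2 by simp
  qed
next
  case False
  then obtain k where k: "m = 2 * k + 1" by (auto elim: oddE)
  have "real (5 * k + 3) / real (2 * k + 1) - 5 / 2 = 1 / (2 * real (2 * k + 1))"
    by (simp add: field_simps)
  then show ?thesis using k alpha_odd[of k] by (simp add: field_simps)
qed

lemma alpha_limit: "(\<lambda>m. real (alpha (symb_pow Jideal m)) / real m) \<longlonglongrightarrow> 5 / 2"
proof -
  let ?f = "\<lambda>m. real (alpha (symb_pow Jideal m)) / real m - 5 / 2"
  have "\<forall>\<^sub>F m in sequentially. norm (?f m) \<le> norm (1 / real m) * 1"
    using alpha_quotient_close by (intro eventually_sequentiallyI[of 1]) simp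
  then have "?f \<longlonglongrightarrow> 0" by (rule tendsto_0_le[OF lim_1_over_n])
  then have "(\<lambda>m. ?f m + 5 / 2) \<longlonglongrightarrow> 0 + 5 / 2" by (intro tendsto_add tendsto_const)
  then show ?thesis by simp
qed

theorem theorem4p1:
  shows "((\<lambda>m. real (alpha (symb_pow Jideal m)) / real m) \<longlonglongrightarrow> 5 / 2)
    \<and> (\<forall>k\<ge>2. alpha (symb_pow Jideal (2 * k)) = 5 * k)
    \<and> (\<forall>k. alpha (symb_pow Jideal (2 * k + 1)) = 5 * k + 3)
    \<and> alpha (symb_pow Jideal 2) = 6"
  using alpha_limit alpha_even alpha_odd alpha_2 by blast
end
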